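(* Let $G$ be a graph, $k$ a positive integer, $P$ a non-trivial prime graph in a split decomposition of $G$, and suppose $G$ has a branch decomposition of sm-width less than $k$. If $b\in V(P)$ satisfies $|\operatorname{act}(b:P)|\ge 3k$ and $|\operatorname{act}(N_P(b):P)|\ge 9k$, then there exists $a\in N_P(b)$ such that $a$ and $b$ form a heavy pair, i.e. $|\operatorname{act}(a:P)|\ge 3k$.
   Context: Graphs are finite, simple, undirected; $\overline{A}=V(G)\setminus A$; $N(S)=N_G(S)=(\bigcup_{v\in S}N(v))\setminus S$. A split of a connected graph $G$ is a partition $(V_1,V_2)$ of $V(G)$ with $|V_1|,|V_2|\ge2$ such that every vertex of $V_1$ with a neighbour in $V_2$ has the same neighbourhood in $V_2$. $\operatorname{mm}(A)$ is the maximum size of a matching in the bipartite graph of edges between $A$ and $\overline A$; $\operatorname{sm}(A)=1$ if $(A,\overline A)$ is a split, else $\operatorname{sm}(A)=\operatorname{mm}(A)$. A branch decomposition $(T,\delta)$: tree of max degree 3, bijection $\delta$ from leaves to $V(G)$; each edge of $T$ induces the cut given by the leaf-images of the two components of $T-e$; its sm-width is the max of $\operatorname{sm}$ over induced cuts. Split decomposition: decomposing along a split $(V_1,V_2)$ gives $G[V_1]$ plus a new marker adjacent to $N_G(V_2)$ and $G[V_2]$ plus the same marker adjacent to $N_G(V_1)$; prime = no split; non-trivial = more than 3 vertices; a split decomposition recursively decomposes until all parts $G_1,\dots,G_q$ are prime, with tree having prime graphs as nodes adjacent iff sharing a marker. For $v\in V(G_i)$: $\operatorname{tot}(v:G_i)=\{v\}$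 if $v\in V(G)$, else (marker shared with $G_j$) the vertices of $V(G)$ in the prime graphs of the component of the tree minus $G_i$ containing $G_j$. $\operatorname{act}(v:G_i)=N_G(V(G)\setminus\operatorname{tot}(v:G_i))$; for sets, $\operatorname{act}(V':G_i)=\bigcup_{v\in V'}\operatorname{act}(v:G_i)$. With respect to $k$, two adjacent vertices $a,b$ of a prime graph $G_i$ form a heavy pair (and $ab$ is a heavy edge) if $|\operatorname{act}(a:G_i)|\ge 3k$ and $|\operatorname{act}(b:G_i)|\ge 3k$. *)

theory Defs
  imports Main
begin

type_synonym 'a graph = "'a set \<times> ('a \<Rightarrow> 'a \<Rightarrow> bool)"

definition verts :: "'a graph \<Rightarrow> 'a set" where "verts G = fst G"
definition adj :: "'a graph \<Rightarrow> 'a \<Rightarrow> 'a \<Rightarrow> bool" where "adj G = snd G"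

definition simple_graph :: "'a graph \<Rightarrow> bool" where
  "simple_graph G \<longleftrightarrow> finite (verts G) \<and>
     (\<forall>x y. adj G x y \<longrightarrow> x \<in> verts G \<and> y \<in> verts G \<and> x \<noteq> y \<and> adj G y x)"

definition nbr :: "'a graph \<Rightarrow> 'a \<Rightarrow> 'a set" where
  "nbr G v = {u \<in> verts G. adj G v u}"

definition nbrs :: "'a graph \<Rightarrow> 'a set \<Rightarrow> 'a set" where
  "nbrs G S = (\<Union>v\<in>S. nbr G v) - S"

definition connected :: "'a graph \<Rightarrow> bool" where
  "connected G \<longleftrightarrow> verts G \<noteq> {} \<and>
     (\<forall>x\<in>verts G. \<forall>y\<in>verts G. (x, y) \<in> {(u, v). adj G u v}\<^sup>*)"

definition is_split :: "'a graph \<Rightarrow> 'a set \<Rightarrow> 'a set \<Rightarrow> bool" where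
  "is_split H V1 V2 \<longleftrightarrow> connected H \<and> V1 \<union> V2 = verts H \<and> V1 \<inter> V2 = {} \<and>
     card V1 \<ge> 2 \<and> card V2 \<ge> 2 \<and>
     (\<forall>x\<in>V1. \<forall>y\<in>V1. nbr H x \<inter> V2 \<noteq> {} \<and> nbr H y \<inter> V2 \<noteq> {} \<longrightarrow>
        nbr H x \<inter> V2 = nbr H y \<inter> V2)"

definition prime_graph :: "'a graph \<Rightarrow> bool" where
  "prime_graph H \<longleftrightarrow> \<not> (\<exists>V1 V2. is_split H V1 V2)"

definition decomp_part :: "'a graph \<Rightarrow> 'a set \<Rightarrow> 'a set \<Rightarrow> 'a \<Rightarrow> 'a graph" where
  "decomp_part H V1 V2 m =
     (insert m V1,
      \<lambda>x y. (x \<in> V1 \<and> y \<in> V1 \<and> adj H x y) \<or> (x = m \<and> y \<in> nbrs H V2) \<or> (y = m \<and> x \<in> nbrs H V2))"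

text \<open>Partial split decompositions of a connected graph G, represented by the set of
  current parts; each step decomposes one part along a split with a fresh marker.\<close>
inductive split_dec :: "'a graph \<Rightarrow> 'a graph set \<Rightarrow> bool" for G where
  base: "connected G \<Longrightarrow> split_dec G {G}"
| step: "split_dec G D \<Longrightarrow> H \<in> D \<Longrightarrow> is_split H V1 V2 \<Longrightarrow> m \<notin> verts G \<Longrightarrow>
         (\<forall>Q\<in>D. m \<notin> verts Q) \<Longrightarrow>
         split_dec G (insert (decomp_part H V1 V2 m) (insert (decomp_part H V2 V1 m) (D - {H})))"

definition split_decomposition :: "'a graph \<Rightarrow> 'a graph set \<Rightarrow> bool" where
  "split_decomposition G D \<longleftrightarrow> split_dec G D \<and> (\<forall>Q\<in>D. prime_graph Q)"

text \<open>Decomposition tree: parts are adjacent iff they share a (marker) vertex.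
  Edge relation of the tree with the node P removed.\<close>
definition tree_rel_without :: "'a graph set \<Rightarrow> 'a graph \<Rightarrow> ('a graph \<times> 'a graph) set" where
  "tree_rel_without D P = {(A, B). A \<in> D \<and> B \<in> D \<and> A \<noteq> P \<and> B \<noteq> P \<and> A \<noteq> B \<and>
                                    verts A \<inter> verts B \<noteq> {}}"

definition tot :: "'a graph \<Rightarrow> 'a graph set \<Rightarrow> 'a graph \<Rightarrow> 'a \<Rightarrow> 'a set" where
  "tot G D P v = (if v \<in> verts G then {v}
     else verts G \<inter> \<Union>{verts R | R Q. Q \<in> D \<and> Q \<noteq> P \<and> v \<in> verts Q \<and>
                                        (Q, R) \<in> (tree_rel_without D P)\<^sup>*})"

definition act :: "'a graph \<Rightarrow> 'a graph set \<Rightarrow> 'a graph \<Rightarrow> 'a \<Rightarrow> 'a set" where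
  "act G D P v = nbrs G (verts G - tot G D P v)"

definition act_set :: "'a graph \<Rightarrow> 'a graph set \<Rightarrow> 'a graph \<Rightarrow> 'a set \<Rightarrow> 'a set" where
  "act_set G D P S = (\<Union>v\<in>S. act G D P v)"

definition mm :: "'a graph \<Rightarrow> 'a set \<Rightarrow> nat" where
  "mm G A = Max {card M | M. M \<subseteq> {(a, b). a \<in> A \<and> b \<in> verts G - A \<and> adj G a b} \<and>
                             inj_on fst M \<and> inj_on snd M}"

definition sm :: "'a graph \<Rightarrow> 'a set \<Rightarrow> nat" where
  "sm G A = (if is_split G A (verts G - A) then 1 else mm G A)"

definition tree :: "nat set \<Rightarrow> nat set set \<Rightarrow> bool" where
  "tree N E \<longleftrightarrow> finite N \<and> N \<noteq> {} \<and>
     E \<subseteq> {{x, y} | x y. x \<in> N \<and> y \<in> N \<and> x \<noteq> y} \<and>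
     (\<forall>x\<in>N. \<forall>y\<in>N. (x, y) \<in> {(u, v). {u, v} \<in> E}\<^sup>*) \<and>
     card E + 1 = card N"

definition tdeg :: "nat set set \<Rightarrow> nat \<Rightarrow> nat" where
  "tdeg E x = card {e \<in> E. x \<in> e}"

definition leaves :: "nat set \<Rightarrow> nat set set \<Rightarrow> nat set" where
  "leaves N E = {x \<in> N. tdeg E x \<le> 1}"

definition branch_decomposition :: "'a graph \<Rightarrow> nat set \<Rightarrow> nat set set \<Rightarrow> (nat \<Rightarrow> 'a) \<Rightarrow> bool" where
  "branch_decomposition G N E \<delta> \<longleftrightarrow> tree N E \<and> (\<forall>x\<in>N. tdeg E x \<le> 3) \<and>
     bij_betw \<delta> (leaves N E) (verts G)"

definition comp_without :: "nat set \<Rightarrow> nat set set \<Rightarrow> nat set \<Rightarrow> nat \<Rightarrow> nat set" where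
  "comp_without N E e x = {y \<in> N. (x, y) \<in> {(u, v). {u, v} \<in> E - {e}}\<^sup>*}"

definition induced_cut :: "nat set \<Rightarrow> nat set set \<Rightarrow> (nat \<Rightarrow> 'a) \<Rightarrow> nat set \<Rightarrow> nat \<Rightarrow> 'a set" where
  "induced_cut N E \<delta> e x = \<delta> ` (leaves N E \<inter> comp_without N E e x)"

definition sm_width_less :: "'a graph \<Rightarrow> nat \<Rightarrow> bool" where
  "sm_width_less G k \<longleftrightarrow> (\<exists>N E \<delta>. branch_decomposition G N E \<delta> \<and>
     (\<forall>e\<in>E. \<forall>x\<in>e. sm G (induced_cut N E \<delta> e x) < k))"

end

theory Submission
  imports Defs
begin

(* Suppose every neighbour a of b in the prime part P has fewer than 3k active vertices.
   Let X = act(b) and Y = act(N_P(b)).  Since the split decomposition represents G,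
   every vertex of X is adjacent to every vertex of Y.  Because the branch decomposition
   has maximum degree three, one of its edges induces a cut A with at least 3k vertices
   of Y on each side, and sm(A) < k.  If (A, V(G) - A) is not a split, sm(A) = mm(A),
   and the complete bipartite graph between X and Y yields a matching of size k across
   the cut, a contradiction.  If it is a split, the light neighbours force four vertices
   of P, two with active vertices in A and two with active vertices outside A; choosing
   active representatives pulls the split of G back to a split of P, contradicting
   primality. *)

section \<open>Trees and balanced edges of branch decompositions\<close>

definition edge_rel :: "'b set set \<Rightarrow> ('b \<times> 'b) set" where
  "edge_rel F = {(u, v). {u, v} \<in> F}"

definition doubletons :: "'b set \<Rightarrow> 'b set set" where
  "doubletons N = {{x, y} | x y. x \<in> N \<and> y \<in> N \<and> x \<noteq> y}"

lemma edge_rel_rtrancl_sym: "(x, y) \<in> (edge_rel F)\<^sup>* \<Longrightarrow> (y, x) \<in> (edge_rel F)\<^sup>*"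
proof -
  have "sym (edge_rel F)" by (auto simp: sym_def edge_rel_def insert_commute)
  then show "(x, y) \<in> (edge_rel F)\<^sup>* \<Longrightarrow> (y, x) \<in> (edge_rel F)\<^sup>*"
    by (metis sym_rtrancl symD)
qed

lemma doubletons_mem: "F \<subseteq> doubletons N \<Longrightarrow> {u, v} \<in> F \<Longrightarrow> u \<in> N \<and> v \<in> N \<and> u \<noteq> v"
  unfolding doubletons_def by (auto simp: doubleton_eq_iff)

lemma finite_doubletons: "finite N \<Longrightarrow> F \<subseteq> doubletons N \<Longrightarrow> finite F"
  by (rule finite_subset[of _ "Pow N"]) (auto simp: doubletons_def)

lemma reach_without_edge:
  assumes "{a, b} \<in> F" "(a, z) \<in> (edge_rel F)\<^sup>*"
  shows "(a, z) \<in> (edge_rel (F - {{a, b}}))\<^sup>* \<or> (b, z) \<in> (edge_rel (F - {{a, b}}))\<^sup>*"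
  using assms(2)
proof (induction rule: rtrancl_induct)
  case (step y z)
  then have yz: "{y, z} \<in> F" by (simp add: edge_rel_def)
  show ?case
  proof (cases "{y, z} = {a, b}")
    case True
    then have "z = a \<or> z = b" by (auto simp: doubleton_eq_iff)
    then show ?thesis by auto
  next
    case False
    then have "(y, z) \<in> edge_rel (F - {{a, b}})" using yz by (simp add: edge_rel_def)
    then show ?thesis using step.IH by (meson rtrancl.rtrancl_into_rtrancl)
  qed
qed simp

lemma reach_without_nonbridge:
  assumes "(a, b) \<in> (edge_rel (F - {{a, b}}))\<^sup>*"
  shows "(edge_rel F)\<^sup>* \<subseteq> (edge_rel (F - {{a, b}}))\<^sup>*"
proof (rule rtrancl_subset_rtrancl, rule subsetI)
  fix p assume "p \<in> edge_rel F"
  then obtain u v where p: "p = (u, v)" "{u, v} \<in> F" by (auto simp: edge_rel_def)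
  show "p \<in> (edge_rel (F - {{a, b}}))\<^sup>*"
  proof (cases "{u, v} = {a, b}")
    case True
    then have "(u = a \<and> v = b) \<or> (u = b \<and> v = a)" by (auto simp: doubleton_eq_iff)
    then show ?thesis using assms edge_rel_rtrancl_sym[OF assms] p by auto
  next
    case False
    then show ?thesis using p by (auto simp: edge_rel_def)
  qed
qed

definition component :: "'b set set \<Rightarrow> 'b \<Rightarrow> 'b set" where
  "component F a = {z. (a, z) \<in> (edge_rel F)\<^sup>*}"

definition component_edges :: "'b set set \<Rightarrow> 'b \<Rightarrow> 'b set set" where
  "component_edges F a = {g \<in> F. g \<subseteq> component F a}"

lemma component_connected:
  assumes "x \<in> component F a" "y \<in> component F a"
  shows "(x, y) \<in> (edge_rel (component_edges F a))\<^sup>*"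
proof -
  have from_a: "(a, z) \<in> (edge_rel (component_edges F a))\<^sup>*" if "z \<in> component F a" for z
  proof -
    have "(a, z) \<in> (edge_rel F)\<^sup>*" using that by (simp add: component_def)
    then show ?thesis
    proof (induction rule: rtrancl_induct)
      case (step y z)
      then have "(a, z) \<in> (edge_rel F)\<^sup>*" by (meson rtrancl.rtrancl_into_rtrancl)
      then have "{y, z} \<subseteq> component F a" using step(1) by (simp add: component_def)
      then have "{y, z} \<in> component_edges F a"
        using step(2) by (simp add: edge_rel_def component_edges_def)
      then have "(y, z) \<in> edge_rel (component_edges F a)" by (simp add: edge_rel_def)
      then show ?case using step.IH by (meson rtrancl.rtrancl_into_rtrancl)
    qed simp
  qed
  show ?thesis using from_a[OF assms(1)] from_a[OF assms(2)]
    by (metis edge_rel_rtrancl_sym rtrancl_trans)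
qed

lemma component_edges_doubletons:
  assumes "F \<subseteq> doubletons N"
  shows "component_edges F a \<subseteq> doubletons (N \<inter> component F a)"
proof
  fix g assume g: "g \<in> component_edges F a"
  then obtain u v where "g = {u, v}" "u \<in> N" "v \<in> N" "u \<noteq> v"
    using assms unfolding component_edges_def doubletons_def by blast
  then show "g \<in> doubletons (N \<inter> component F a)"
    using g unfolding component_edges_def doubletons_def by blast
qed

lemma component_edges_closed:
  assumes "{u, v} \<in> F" "u \<in> component F a"
  shows "{u, v} \<in> component_edges F a"
proof -
  have "(u, v) \<in> edge_rel F" using assms(1) by (simp add: edge_rel_def)
  then have "v \<in> component F a" using assms(2) by (auto simp: component_def)
  then show ?thesis using assms by (simp add: component_edges_def)
qed

lemma components_disjoint:
  assumes "(a, b) \<notin> (edge_rel F)\<^sup>*"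
  shows "component F a \<inter> component F b = {}"
proof (rule ccontr)
  assume "component F a \<inter> component F b \<noteq> {}"
  then obtain z where "(a, z) \<in> (edge_rel F)\<^sup>*" "(b, z) \<in> (edge_rel F)\<^sup>*"
    unfolding component_def by blast
  then have "(a, b) \<in> (edge_rel F)\<^sup>*" using edge_rel_rtrancl_sym rtrancl_trans by metis
  then show False using assms by simp
qed

lemma two_components_edges:
  assumes fin: "finite F" and sub: "F \<subseteq> doubletons N"
    and cover: "N \<subseteq> component F a \<union> component F b" and apart: "(a, b) \<notin> (edge_rel F)\<^sup>*"
  shows "card (component_edges F a) + card (component_edges F b) = card F"
proof -
  let ?Fa = "component_edges F a" and ?Fb = "component_edges F b"
  have "F \<subseteq> ?Fa \<union> ?Fb"
  proof
    fix g assume g: "g \<in> F"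
    then obtain u v where "g = {u, v}" "u \<in> N" using sub unfolding doubletons_def by blast
    then show "g \<in> ?Fa \<union> ?Fb" using cover component_edges_closed[of u v F] g by blast
  qed
  moreover have part: "?Fa \<subseteq> F" "?Fb \<subseteq> F" unfolding component_edges_def by auto
  ultimately have "?Fa \<union> ?Fb = F" by blast
  moreover have "?Fa \<inter> ?Fb = {}"
    using components_disjoint[OF apart] sub unfolding component_edges_def doubletons_def by blast
  moreover have "finite ?Fa" "finite ?Fb" using part fin finite_subset by blast+
  ultimately show ?thesis using card_Un_disjoint by metis
qed

text \<open>Remove an edge: either the graph stays connected, or it falls into the two
  components of the endpoints, and induction applies to both.\<close>

lemma connected_card_edges:
  assumes "finite N" "F \<subseteq> doubletons N" "\<forall>x\<in>N. \<forall>y\<in>N. (x, y) \<in> (edge_rel F)\<^sup>*"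
  shows "card N \<le> card F + 1"
  using assms
proof (induction "card F" arbitrary: N F rule: less_induct)
  case less
  have finF: "finite F" using finite_doubletons less.prems by blast
  show ?case
  proof (cases "F = {}")
    case True
    then have "\<forall>x\<in>N. \<forall>y\<in>N. x = y" using less.prems(3) by (auto simp: edge_rel_def)
    then have "card N \<le> 1" using less.prems(1) by (simp add: card_le_Suc0_iff_eq)
    then show ?thesis by simp
  next
    case False
    then obtain g where "g \<in> F" by blast
    then obtain a b where ab: "{a, b} \<in> F" "a \<in> N" "b \<in> N"
      using less.prems(2) unfolding doubletons_def by blast
    define F' where "F' = F - {{a, b}}"
    have F'_sub: "F' \<subseteq> doubletons N" using less.prems(2) F'_def by auto
    have card_F': "card F' + 1 = card F"
      using ab(1) finF card_Diff_singleton card.remove unfolding F'_def by fastforce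
    show ?thesis
    proof (cases "(a, b) \<in> (edge_rel F')\<^sup>*")
      case True
      then have "\<forall>x\<in>N. \<forall>y\<in>N. (x, y) \<in> (edge_rel F')\<^sup>*"
        using reach_without_nonbridge[of a b F] less.prems(3) unfolding F'_def by blast
      then show ?thesis using less.hyps[of F' N] less.prems(1) F'_sub card_F' by simp
    next
      case False
      define N1 N2 where "N1 = N \<inter> component F' a" and "N2 = N \<inter> component F' b"
      have N12: "N \<subseteq> N1 \<union> N2"
      proof
        fix y assume "y \<in> N"
        then have "(a, y) \<in> (edge_rel F)\<^sup>*" using less.prems(3) ab(2) by blast
        then show "y \<in> N1 \<union> N2"
          using reach_without_edge[OF ab(1)] \<open>y \<in> N\<close>
          unfolding N1_def N2_def F'_def component_def by blast
      qed
      have card_F12: "card (component_edges F' a) + card (component_edges F' b) = card F'"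
        using two_components_edges[OF _ F'_sub _ False] finF N12
        unfolding F'_def N1_def N2_def by auto
      have component_bound: "card (N \<inter> component F' c) \<le> card (component_edges F' c) + 1"
        if "card (component_edges F' c) < card F" for c
      proof (rule less.hyps[OF that])
        show "finite (N \<inter> component F' c)" using less.prems(1) by simp
        show "component_edges F' c \<subseteq> doubletons (N \<inter> component F' c)"
          by (rule component_edges_doubletons[OF F'_sub])
        show "\<forall>x\<in>N \<inter> component F' c. \<forall>y\<in>N \<inter> component F' c.
            (x, y) \<in> (edge_rel (component_edges F' c))\<^sup>*"
          by (auto intro: component_connected)
      qed
      have "card N \<le> card N1 + card N2"
        using card_mono[OF _ N12] card_Un_le[of N1 N2] less.prems(1) unfolding N1_def N2_def by simp
      then show ?thesis
        using component_bound[of a] component_bound[of b] card_F12 card_F'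
        unfolding N1_def N2_def by linarith
    qed
  qed
qed

lemma comp_without_edge_rel: "comp_without N E e x = {y \<in> N. (x, y) \<in> (edge_rel (E - {e}))\<^sup>*}"
  by (simp add: comp_without_def edge_rel_def)

lemma tree_doubletons: "tree N E \<Longrightarrow> E \<subseteq> doubletons N"
  by (simp add: tree_def doubletons_def)

lemma tree_connected: "tree N E \<Longrightarrow> x \<in> N \<Longrightarrow> y \<in> N \<Longrightarrow> (x, y) \<in> (edge_rel E)\<^sup>*"
  by (simp add: tree_def edge_rel_def)

lemma tree_finite:
  assumes "tree N E" shows "finite N" "finite E"
proof -
  show N: "finite N" using assms by (simp add: tree_def)
  show "finite E" using finite_doubletons[OF N tree_doubletons[OF assms]] .
qed

lemma tree_edge_bridge:
  assumes T: "tree N E" and e: "{x, y} \<in> E"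
  shows "y \<notin> comp_without N E {x, y} x"
proof
  assume "y \<in> comp_without N E {x, y} x"
  then have "(x, y) \<in> (edge_rel (E - {{x, y}}))\<^sup>*" by (simp add: comp_without_edge_rel)
  then have "(edge_rel E)\<^sup>* \<subseteq> (edge_rel (E - {{x, y}}))\<^sup>*" by (rule reach_without_nonbridge)
  then have "\<forall>a\<in>N. \<forall>b\<in>N. (a, b) \<in> (edge_rel (E - {{x, y}}))\<^sup>*"
    using tree_connected[OF T] by blast
  moreover have "E - {{x, y}} \<subseteq> doubletons N" using tree_doubletons[OF T] by blast
  ultimately have "card N \<le> card (E - {{x, y}}) + 1"
    using connected_card_edges[of N "E - {{x, y}}"] tree_finite(1)[OF T] by simp
  moreover have "card E > 0" using e tree_finite(2)[OF T] card_gt_0_iff by blast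
  then have "card (E - {{x, y}}) + 1 = card E" using card_Diff_singleton[OF e] by simp
  ultimately show False using T by (simp add: tree_def)
qed

lemma comp_without_cover:
  assumes Ep: "E \<subseteq> doubletons N" and z: "z \<in> comp_without N E e x"
  shows "z = x \<or> (\<exists>x'. {x, x'} \<in> E \<and> {x, x'} \<noteq> e \<and> z \<in> comp_without N E {x, x'} x')"
proof -
  have "(x, z) \<in> (edge_rel (E - {e}))\<^sup>*" using z by (simp add: comp_without_edge_rel)
  then show ?thesis
  proof (induction rule: rtrancl_induct)
    case (step y z)
    then have yz: "{y, z} \<in> E" "{y, z} \<noteq> e" by (auto simp: edge_rel_def)
    have zN: "z \<in> N" using doubletons_mem[OF Ep yz(1)] by auto
    from step.IH show ?case
    proof
      assume "y = x"
      then show ?thesis using yz zN by (auto simp: comp_without_edge_rel)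
    next
      assume "\<exists>x'. {x, x'} \<in> E \<and> {x, x'} \<noteq> e \<and> y \<in> comp_without N E {x, x'} x'"
      then obtain x' where x': "{x, x'} \<in> E" "{x, x'} \<noteq> e" "y \<in> comp_without N E {x, x'} x'"
        by blast
      show ?thesis
      proof (cases "{y, z} = {x, x'}")
        case True
        then have "z = x \<or> z = x'" by (auto simp: doubleton_eq_iff)
        then show ?thesis using x' zN by (auto simp: comp_without_edge_rel)
      next
        case False
        then have "(y, z) \<in> edge_rel (E - {{x, x'}})" using yz by (simp add: edge_rel_def)
        then have "z \<in> comp_without N E {x, x'} x'"
          using x'(3) zN by (auto simp: comp_without_edge_rel intro: rtrancl.rtrancl_into_rtrancl)
        then show ?thesis using x' by blast
      qed
    qed
  qed simp
qed

text \<open>The far side of another edge {x, x'} at x is strictly contained in the side of e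
  at x, since it does not contain x.\<close>

lemma comp_without_child:
  assumes T: "tree N E" and xe: "x \<in> e" and e': "{x, x'} \<in> E" "{x, x'} \<noteq> e"
  shows "comp_without N E {x, x'} x' \<subset> comp_without N E e x"
proof -
  have Ep: "E \<subseteq> doubletons N" using tree_doubletons[OF T] .
  have nx: "x \<notin> comp_without N E {x, x'} x'"
    using tree_edge_bridge[OF T, of x' x] e'(1) by (simp add: insert_commute)
  have x_side: "x \<in> comp_without N E e x" using doubletons_mem[OF Ep e'(1)]
    by (simp add: comp_without_edge_rel)
  have "comp_without N E {x, x'} x' \<subseteq> comp_without N E e x"
  proof
    fix z assume z: "z \<in> comp_without N E {x, x'} x'"
    have "(x', z) \<in> (edge_rel (E - {{x, x'}}))\<^sup>*" using z by (simp add: comp_without_edge_rel)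
    then have "(x', z) \<in> (edge_rel (E - {e}))\<^sup>*"
    proof (induction rule: rtrancl_induct)
      case (step y z)
      then have yz: "{y, z} \<in> E" "{y, z} \<noteq> {x, x'}" by (auto simp: edge_rel_def)
      have "y \<in> comp_without N E {x, x'} x'" "z \<in> comp_without N E {x, x'} x'"
        using step(1,2) doubletons_mem[OF Ep yz(1)]
        by (auto simp: comp_without_edge_rel intro: rtrancl.rtrancl_into_rtrancl)
      then have "{y, z} \<noteq> e" using nx xe by auto
      then have "(y, z) \<in> edge_rel (E - {e})" using yz by (simp add: edge_rel_def)
      then show ?case using step.IH by (rule rtrancl.rtrancl_into_rtrancl[rotated])
    qed simp
    moreover have "(x, x') \<in> edge_rel (E - {e})" using e' by (simp add: edge_rel_def)
    ultimately have "(x, z) \<in> (edge_rel (E - {e}))\<^sup>*" by (meson converse_rtrancl_into_rtrancl)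
    then show "z \<in> comp_without N E e x" using z by (simp add: comp_without_edge_rel comp_without_def)
  qed
  then show ?thesis using nx x_side by blast
qed

lemma other_edges_card:
  assumes T: "tree N E" and deg: "tdeg E x \<le> 3" and e: "e \<in> E" "x \<in> e"
  shows "card {x'. {x, x'} \<in> E \<and> {x, x'} \<noteq> e} \<le> 2"
proof -
  let ?U = "{x'. {x, x'} \<in> E \<and> {x, x'} \<noteq> e}"
  have fin: "finite {e' \<in> E. x \<in> e'}" using tree_finite[OF T] by simp
  have img: "(\<lambda>x'. {x, x'}) ` ?U \<subseteq> {e' \<in> E. x \<in> e'} - {e}" by auto
  have inj: "inj_on (\<lambda>x'. {x, x'}) ?U" by (rule inj_onI) (auto simp: doubleton_eq_iff)
  have "card ?U \<le> card ({e' \<in> E. x \<in> e'} - {e})"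
    using card_inj_on_le[OF inj img] fin by simp
  also have "\<dots> = tdeg E x - 1" unfolding tdeg_def using e fin by (simp add: card_Diff_singleton)
  finally show ?thesis using deg by simp
qed

text \<open>Some edge side carries at least a third of a set of at least 9k leaf labels:
  the two sides of any edge cover all leaves.\<close>

lemma heavy_side_exists:
  assumes T: "tree N E" and Y: "Y \<subseteq> \<delta> ` leaves N E" "finite Y" and k: "card Y \<ge> 9 * k" "k > 0"
  shows "\<exists>e\<in>E. \<exists>x\<in>e. card (Y \<inter> induced_cut N E \<delta> e x) \<ge> 3 * k"
proof -
  have leaves_N: "leaves N E \<subseteq> N" by (auto simp: leaves_def)
  have fin_leaves: "finite (leaves N E)" using finite_subset[OF leaves_N tree_finite(1)[OF T]] .
  have "card Y \<le> card (\<delta> ` leaves N E)" using card_mono[OF finite_imageI[OF fin_leaves] Y(1)] .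
  also have "\<dots> \<le> card (leaves N E)" using card_image_le[OF fin_leaves] .
  also have "\<dots> \<le> card N" using card_mono[OF tree_finite(1)[OF T] leaves_N] .
  finally have "card Y \<le> card N" .
  moreover have "card E + 1 = card N" using T by (simp add: tree_def)
  ultimately have "card E \<noteq> 0" using k by linarith
  then obtain g where "g \<in> E" by fastforce
  then obtain a b where ab: "{a, b} \<in> E" "a \<in> N"
    using tree_doubletons[OF T] unfolding doubletons_def by blast
  have "Y \<subseteq> (Y \<inter> induced_cut N E \<delta> {a, b} a) \<union> (Y \<inter> induced_cut N E \<delta> {a, b} b)"
  proof
    fix y assume "y \<in> Y"
    then obtain z where z: "z \<in> leaves N E" "y = \<delta> z" using Y by auto
    then have "z \<in> N" using leaves_N by blast
    then have "(a, z) \<in> (edge_rel E)\<^sup>*" using tree_connected[OF T ab(2)] by blast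
    then have "z \<in> comp_without N E {a, b} a \<or> z \<in> comp_without N E {a, b} b"
      using reach_without_edge[OF ab(1)] \<open>z \<in> N\<close> by (auto simp: comp_without_edge_rel)
    then show "y \<in> (Y \<inter> induced_cut N E \<delta> {a, b} a) \<union> (Y \<inter> induced_cut N E \<delta> {a, b} b)"
      using \<open>y \<in> Y\<close> z by (auto simp: induced_cut_def)
  qed
  moreover have "finite ((Y \<inter> induced_cut N E \<delta> {a, b} a) \<union> (Y \<inter> induced_cut N E \<delta> {a, b} b))"
    using Y(2) by simp
  ultimately have "card Y \<le> card ((Y \<inter> induced_cut N E \<delta> {a, b} a) \<union> (Y \<inter> induced_cut N E \<delta> {a, b} b))"
    by (simp add: card_mono)
  then have "card Y \<le> card (Y \<inter> induced_cut N E \<delta> {a, b} a) + card (Y \<inter> induced_cut N E \<delta> {a, b} b)"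
    using card_Un_le order_trans by blast
  then have "card (Y \<inter> induced_cut N E \<delta> {a, b} a) \<ge> 3 * k \<or>
             card (Y \<inter> induced_cut N E \<delta> {a, b} b) \<ge> 3 * k" using k by linarith
  then show ?thesis using ab(1) by blast
qed

lemma side_card_le_children:
  assumes T: "tree N E" and Y: "finite Y"
  shows "card (Y \<inter> induced_cut N E \<delta> e x) \<le>
    Suc (\<Sum>x'\<in>{x'. {x, x'} \<in> E \<and> {x, x'} \<noteq> e}. card (Y \<inter> induced_cut N E \<delta> {x, x'} x'))"
proof -
  define U where "U = {x'. {x, x'} \<in> E \<and> {x, x'} \<noteq> e}"
  have "U \<subseteq> N" using doubletons_mem[OF tree_doubletons[OF T]] unfolding U_def by blast
  then have fin_U: "finite U" using finite_subset tree_finite(1)[OF T] by blast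
  let ?children = "\<Union>x'\<in>U. Y \<inter> induced_cut N E \<delta> {x, x'} x'"
  have "comp_without N E e x \<subseteq> insert x (\<Union>x'\<in>U. comp_without N E {x, x'} x')"
    using comp_without_cover[OF tree_doubletons[OF T]] unfolding U_def by blast
  then have "Y \<inter> induced_cut N E \<delta> e x \<subseteq> insert (\<delta> x) ?children"
    unfolding induced_cut_def by blast
  moreover have fin_children: "finite ?children" using Y fin_U by simp
  ultimately have "card (Y \<inter> induced_cut N E \<delta> e x) \<le> card (insert (\<delta> x) ?children)"
    by (simp add: card_mono)
  also have "\<dots> \<le> Suc (card ?children)" using fin_children by (simp add: card_insert_if)
  also have "\<dots> \<le> Suc (\<Sum>x'\<in>U. card (Y \<inter> induced_cut N E \<delta> {x, x'} x'))"
    using card_UN_le[OF fin_U, of "\<lambda>x'. Y \<inter> induced_cut N E \<delta> {x, x'} x'"] by (simp only: Suc_le_mono)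
  finally show ?thesis unfolding U_def .
qed

text \<open>Take an edge side with at least 3k labels that is minimal; its at most two child
  sides carry fewer than 3k labels each, so it carries at most 6k - 1 labels and the
  other side at least 3k.\<close>

lemma balanced_edge:
  assumes T: "tree N E" and deg: "\<forall>x\<in>N. tdeg E x \<le> 3"
    and Y: "Y \<subseteq> \<delta> ` leaves N E" "finite Y" "card Y \<ge> 9 * k" and k: "k > 0"
  shows "\<exists>e\<in>E. \<exists>x\<in>e. card (Y \<inter> induced_cut N E \<delta> e x) \<ge> 3 * k \<and>
                      card (Y - induced_cut N E \<delta> e x) \<ge> 3 * k"
proof -
  define W where "W e x = card (Y \<inter> induced_cut N E \<delta> e x)" for e x
  define size where "size p = card (comp_without N E (fst p) (snd p))" for p
  define heavy where "heavy p \<longleftrightarrow> fst p \<in> E \<and> snd p \<in> fst p \<and> W (fst p) (snd p) \<ge> 3 * k" for p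
  obtain e x where "e \<in> E" "x \<in> e" "W e x \<ge> 3 * k"
    using heavy_side_exists[OF T Y k] unfolding W_def by blast
  then have "heavy (e, x)" unfolding heavy_def by simp
  then obtain p where p: "heavy p" and p_min: "\<forall>q. heavy q \<longrightarrow> size p \<le> size q"
    using ex_has_least_nat[of heavy _ size] by blast
  obtain e0 x0 where p_eq: "p = (e0, x0)" by (cases p)
  have e0: "e0 \<in> E" "x0 \<in> e0" "W e0 x0 \<ge> 3 * k" using p unfolding heavy_def p_eq by auto
  have x0N: "x0 \<in> N" using e0 tree_doubletons[OF T] unfolding doubletons_def by auto
  define U where "U = {x'. {x0, x'} \<in> E \<and> {x0, x'} \<noteq> e0}"
  have light_children: "W {x0, x'} x' < 3 * k" if "x' \<in> U" for x'
  proof (rule ccontr)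
    assume "\<not> ?thesis"
    then have "heavy ({x0, x'}, x')" using that unfolding heavy_def U_def by simp
    then have "size p \<le> size ({x0, x'}, x')" using p_min by blast
    moreover have "comp_without N E {x0, x'} x' \<subset> comp_without N E e0 x0"
      using comp_without_child[OF T e0(2)] that unfolding U_def by blast
    moreover have "finite (comp_without N E e0 x0)"
      using tree_finite(1)[OF T] by (simp add: comp_without_def)
    ultimately have "size ({x0, x'}, x') < size p" unfolding size_def p_eq
      by (simp add: psubset_card_mono)
    then show False using \<open>size p \<le> size ({x0, x'}, x')\<close> by simp
  qed
  have "W e0 x0 \<le> Suc (\<Sum>x'\<in>U. W {x0, x'} x')"
    using side_card_le_children[OF T Y(2), of \<delta> e0 x0] unfolding W_def U_def .
  also have "\<dots> \<le> Suc (card U * (3 * k - 1))"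
  proof -
    have "W {x0, x'} x' \<le> 3 * k - 1" if "x' \<in> U" for x' using light_children[OF that] by simp
    then show ?thesis using sum_bounded_above[of U "\<lambda>x'. W {x0, x'} x'" "3 * k - 1"] by simp
  qed
  also have "\<dots> \<le> Suc (2 * (3 * k - 1))"
    using other_edges_card[OF T _ e0(1,2)] deg x0N unfolding U_def by simp
  finally have "W e0 x0 < 6 * k" using k by linarith
  then have "card (Y - induced_cut N E \<delta> e0 x0) \<ge> 3 * k"
    using card_Int_Diff[OF Y(2), of "induced_cut N E \<delta> e0 x0"] Y(3) unfolding W_def by linarith
  then show ?thesis using e0 unfolding W_def by blast
qed

section \<open>Split decompositions represent the graph\<close>

definition reach_parts :: "'a graph set \<Rightarrow> 'a graph \<Rightarrow> 'a \<Rightarrow> 'a graph set" where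
  "reach_parts D P v = {R. \<exists>Q\<in>D. Q \<noteq> P \<and> v \<in> verts Q \<and> (Q, R) \<in> (tree_rel_without D P)\<^sup>*}"

lemma tot_reach_parts:
  "tot G D P v = (if v \<in> verts G then {v} else verts G \<inter> \<Union>(verts ` reach_parts D P v))"
proof -
  have "{verts R | R Q. Q \<in> D \<and> Q \<noteq> P \<and> v \<in> verts Q \<and> (Q, R) \<in> (tree_rel_without D P)\<^sup>*}
        = verts ` reach_parts D P v"
    unfolding reach_parts_def by blast
  then show ?thesis unfolding tot_def by simp
qed

lemma tree_rel_without_iff: "(A, B) \<in> tree_rel_without D P \<longleftrightarrow>
   A \<in> D \<and> B \<in> D \<and> A \<noteq> P \<and> B \<noteq> P \<and> A \<noteq> B \<and> verts A \<inter> verts B \<noteq> {}"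
  by (simp add: tree_rel_without_def)

lemma reach_parts_base: "Q \<in> D \<Longrightarrow> Q \<noteq> P \<Longrightarrow> v \<in> verts Q \<Longrightarrow> Q \<in> reach_parts D P v"
  unfolding reach_parts_def by blast

lemma reach_parts_rtrancl:
  assumes "A \<in> reach_parts D P v" "(A, B) \<in> (tree_rel_without D P)\<^sup>*"
  shows "B \<in> reach_parts D P v"
proof -
  obtain Q where Q: "Q \<in> D" "Q \<noteq> P" "v \<in> verts Q" "(Q, A) \<in> (tree_rel_without D P)\<^sup>*"
    using assms(1) unfolding reach_parts_def by blast
  have "(Q, B) \<in> (tree_rel_without D P)\<^sup>*" using Q(4) assms(2) by (rule rtrancl_trans)
  then have "\<exists>Q\<in>D. Q \<noteq> P \<and> v \<in> verts Q \<and> (Q, B) \<in> (tree_rel_without D P)\<^sup>*"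
    using Q(1-3) by (intro bexI[of _ Q]) simp_all
  then show ?thesis unfolding reach_parts_def by (rule CollectI)
qed

lemma reach_parts_step:
  "A \<in> reach_parts D P v \<Longrightarrow> (A, B) \<in> tree_rel_without D P \<Longrightarrow> B \<in> reach_parts D P v"
  by (erule reach_parts_rtrancl) (rule r_into_rtrancl)

lemma reach_parts_induct[consumes 1, case_names base step]:
  assumes "R \<in> reach_parts D P v"
    and "\<And>Q. Q \<in> D \<Longrightarrow> Q \<noteq> P \<Longrightarrow> v \<in> verts Q \<Longrightarrow> \<Phi> Q"
    and "\<And>A B. \<Phi> A \<Longrightarrow> (A, B) \<in> tree_rel_without D P \<Longrightarrow> \<Phi> B"
  shows "\<Phi> R"
proof -
  obtain Q where Q: "Q \<in> D" "Q \<noteq> P" "v \<in> verts Q" "(Q, R) \<in> (tree_rel_without D P)\<^sup>*"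
    using assms(1) unfolding reach_parts_def by blast
  from Q(4) show ?thesis
  proof (induction rule: rtrancl_induct)
    case base then show ?case by (rule assms(2)[OF Q(1-3)])
  next
    case (step A B) then show ?case using assms(3) by blast
  qed
qed

lemma reach_parts_mem: "R \<in> reach_parts D P v \<Longrightarrow> R \<in> D \<and> R \<noteq> P"
proof (induction rule: reach_parts_induct)
  case (step A B) then show ?case unfolding tree_rel_without_iff by blast
qed simp

lemma reach_parts_mono:
  assumes X: "X \<in> reach_parts D P u" "w \<in> verts X"
  shows "reach_parts D P w \<subseteq> reach_parts D P u"
proof
  fix R assume "R \<in> reach_parts D P w"
  then show "R \<in> reach_parts D P u"
  proof (induction rule: reach_parts_induct)
    case (base Q)
    show ?case
    proof (cases "Q = X")
      case False
      then have "(X, Q) \<in> tree_rel_without D P"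
        using base reach_parts_mem[OF X(1)] X(2) unfolding tree_rel_without_iff by blast
      then show ?thesis by (rule reach_parts_step[OF X(1)])
    qed (use X in simp)
  qed (rule reach_parts_step)
qed

lemma tot_subset: "tot G D P v \<subseteq> verts G"
  by (auto simp: tot_reach_parts)

lemma act_subset_tot: "act G D P v \<subseteq> tot G D P v"
  unfolding act_def nbrs_def nbr_def using tot_subset by blast

lemma act_subset: "act G D P v \<subseteq> verts G"
  using subset_trans[OF act_subset_tot tot_subset] .

definition wf_part :: "'a graph \<Rightarrow> bool" where
  "wf_part Q \<longleftrightarrow> connected Q \<and>
     (\<forall>x y. adj Q x y \<longrightarrow> adj Q y x \<and> x \<in> verts Q \<and> y \<in> verts Q \<and> x \<noteq> y)"

definition faithful :: "'a graph \<Rightarrow> 'a graph set \<Rightarrow> 'a graph \<Rightarrow> bool" where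
  "faithful G D P \<longleftrightarrow>
   (\<forall>u\<in>verts P. tot G D P u \<noteq> {}) \<and>
   (\<forall>u\<in>verts P. \<forall>v\<in>verts P. u \<noteq> v \<longrightarrow> tot G D P u \<inter> tot G D P v = {}) \<and>
   verts G \<subseteq> (\<Union>u\<in>verts P. tot G D P u) \<and>
   (\<forall>u\<in>verts P. \<forall>v\<in>verts P. u \<noteq> v \<longrightarrow>
      (\<forall>x\<in>tot G D P u. \<forall>y\<in>tot G D P v.
          adj G x y \<longleftrightarrow> adj P u v \<and> x \<in> act G D P u \<and> y \<in> act G D P v))"

definition dec_inv :: "'a graph \<Rightarrow> 'a graph set \<Rightarrow> bool" where
  "dec_inv G D \<longleftrightarrow> (\<forall>Q\<in>D. wf_part Q) \<and>
     (\<forall>v\<in>verts G. \<forall>Q1\<in>D. \<forall>Q2\<in>D. v \<in> verts Q1 \<longrightarrow> v \<in> verts Q2 \<longrightarrow> Q1 = Q2) \<and>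
     (\<forall>P\<in>D. faithful G D P)"

lemma dec_inv_adj:
  "dec_inv G D \<Longrightarrow> Q \<in> D \<Longrightarrow> adj Q x y \<Longrightarrow> adj Q y x \<and> x \<in> verts Q \<and> y \<in> verts Q \<and> x \<noteq> y"
  unfolding dec_inv_def wf_part_def by blast

lemma dec_inv_connected: "dec_inv G D \<Longrightarrow> Q \<in> D \<Longrightarrow> connected Q"
  unfolding dec_inv_def wf_part_def by blast

lemma dec_inv_unique:
  "dec_inv G D \<Longrightarrow> v \<in> verts G \<Longrightarrow> Q1 \<in> D \<Longrightarrow> Q2 \<in> D \<Longrightarrow> v \<in> verts Q1 \<Longrightarrow> v \<in> verts Q2
   \<Longrightarrow> Q1 = Q2"
  unfolding dec_inv_def by blast

lemma dec_inv_faithful: "dec_inv G D \<Longrightarrow> P \<in> D \<Longrightarrow> faithful G D P"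
  unfolding dec_inv_def by blast

lemma tot_nonempty:
  assumes "dec_inv G D" "P \<in> D" "u \<in> verts P" shows "tot G D P u \<noteq> {}"
proof -
  have "\<forall>u\<in>verts P. tot G D P u \<noteq> {}"
    using dec_inv_faithful[OF assms(1,2)] unfolding faithful_def by (elim conjE)
  then show ?thesis using assms(3) by blast
qed

lemma tot_disjoint:
  assumes "dec_inv G D" "P \<in> D" "u \<in> verts P" "v \<in> verts P" "u \<noteq> v"
  shows "tot G D P u \<inter> tot G D P v = {}"
proof -
  have "\<forall>u\<in>verts P. \<forall>v\<in>verts P. u \<noteq> v \<longrightarrow> tot G D P u \<inter> tot G D P v = {}"
    using dec_inv_faithful[OF assms(1,2)] unfolding faithful_def by (elim conjE)
  then show ?thesis using assms(3-5) by blast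
qed

lemma tot_cover:
  assumes "dec_inv G D" "P \<in> D" "x \<in> verts G" shows "\<exists>u\<in>verts P. x \<in> tot G D P u"
proof -
  have "verts G \<subseteq> (\<Union>u\<in>verts P. tot G D P u)"
    using dec_inv_faithful[OF assms(1,2)] unfolding faithful_def by (elim conjE)
  then show ?thesis using assms(3) by blast
qed

lemma tot_adj:
  assumes "dec_inv G D" "P \<in> D" "u \<in> verts P" "v \<in> verts P" "u \<noteq> v"
    "x \<in> tot G D P u" "y \<in> tot G D P v"
  shows "adj G x y \<longleftrightarrow> adj P u v \<and> x \<in> act G D P u \<and> y \<in> act G D P v"
proof -
  have "\<forall>u\<in>verts P. \<forall>v\<in>verts P. u \<noteq> v \<longrightarrow>
      (\<forall>x\<in>tot G D P u. \<forall>y\<in>tot G D P v.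
          adj G x y \<longleftrightarrow> adj P u v \<and> x \<in> act G D P u \<and> y \<in> act G D P v)"
    using dec_inv_faithful[OF assms(1,2)] unfolding faithful_def by (elim conjE)
  then show ?thesis using assms(3-7) by simp
qed

lemma nbrs_compl_iff:
  assumes "simple_graph G"
  shows "x \<in> nbrs G (verts G - T) \<longleftrightarrow> x \<in> verts G \<and> x \<in> T \<and> (\<exists>z\<in>verts G - T. adj G x z)"
  using assms unfolding nbrs_def nbr_def simple_graph_def by blast

lemma split_complete:
  assumes S: "is_split H V1 V2" and sy: "\<forall>x y. adj H x y \<longrightarrow> adj H y x \<and> x \<in> verts H \<and> y \<in> verts H"
    and x: "x \<in> V1" and y: "y \<in> V2" and x': "y' \<in> V2" "adj H x y'" and y': "x' \<in> V1" "adj H y x'"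
  shows "adj H x y"
proof -
  have "adj H x' y" using sy y' by blast
  then have "y \<in> nbr H x' \<inter> V2" using sy y by (auto simp: nbr_def)
  moreover have "y' \<in> nbr H x \<inter> V2" using sy x' by (auto simp: nbr_def)
  ultimately have "nbr H x \<inter> V2 = nbr H x' \<inter> V2" using S x y'(1) unfolding is_split_def by blast
  then have "y \<in> nbr H x" using \<open>y \<in> nbr H x' \<inter> V2\<close> by blast
  then show ?thesis by (simp add: nbr_def)
qed

lemma split_sym:
  assumes S: "is_split H V1 V2" and sy: "\<forall>x y. adj H x y \<longrightarrow> adj H y x \<and> x \<in> verts H \<and> y \<in> verts H"
  shows "is_split H V2 V1"
proof -
  have "nbr H x \<inter> V1 \<subseteq> nbr H y \<inter> V1"
    if xy: "x \<in> V2" "y \<in> V2" "nbr H x \<inter> V1 \<noteq> {}" "nbr H y \<inter> V1 \<noteq> {}" for x y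
  proof
    fix z assume z: "z \<in> nbr H x \<inter> V1"
    obtain z' where z': "z' \<in> nbr H y \<inter> V1" using xy by blast
    have "adj H z y"
      using split_complete[OF S sy, of z y x z'] z z' xy sy by (auto simp: nbr_def)
    then show "z \<in> nbr H y \<inter> V1" using sy z by (auto simp: nbr_def)
  qed
  then show ?thesis using S unfolding is_split_def by (metis inf_commute sup_commute subset_antisym)
qed

lemma rtrancl_adj_sym:
  assumes "\<forall>x y. adj Q x y \<longrightarrow> adj Q y x" "(a, b) \<in> {(u, v). adj Q u v}\<^sup>*"
  shows "(b, a) \<in> {(u, v). adj Q u v}\<^sup>*"
proof -
  have "sym {(u, v). adj Q u v}" using assms(1) unfolding sym_def by blast
  then have "sym ({(u, v). adj Q u v}\<^sup>*)" by (rule sym_rtrancl)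
  then show ?thesis using assms(2) unfolding sym_def by blast
qed

lemma faithful_cong:
  assumes "\<And>u. u \<in> verts P \<Longrightarrow> tot G D' P u = tot G D P u"
  shows "faithful G D' P = faithful G D P"
proof -
  have "\<And>u. u \<in> verts P \<Longrightarrow> act G D' P u = act G D P u" using assms by (simp add: act_def)
  then show ?thesis unfolding faithful_def using assms by simp
qed

locale decomp_step =
  fixes G :: "'a graph" and D :: "'a graph set" and H :: "'a graph" and V1 V2 :: "'a set" and m :: 'a
  assumes simple: "simple_graph G" and inv: "dec_inv G D" and H_in: "H \<in> D"
    and split: "is_split H V1 V2" and m_G: "m \<notin> verts G" and m_fresh: "\<forall>Q\<in>D. m \<notin> verts Q"
begin

definition "H1 = decomp_part H V1 V2 m"
definition "H2 = decomp_part H V2 V1 m"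
definition "D' = insert H1 (insert H2 (D - {H}))"

lemma verts_H1: "verts H1 = insert m V1" by (simp add: H1_def decomp_part_def verts_def)
lemma verts_H2: "verts H2 = insert m V2" by (simp add: H2_def decomp_part_def verts_def)

lemma adj_H1: "adj H1 x y \<longleftrightarrow>
    (x \<in> V1 \<and> y \<in> V1 \<and> adj H x y) \<or> (x = m \<and> y \<in> nbrs H V2) \<or> (y = m \<and> x \<in> nbrs H V2)"
  by (simp add: H1_def decomp_part_def adj_def)

lemma V12: "V1 \<union> V2 = verts H" "V1 \<inter> V2 = {}" "V1 \<noteq> {}" "V2 \<noteq> {}"
  using split unfolding is_split_def by auto

lemma m_old: "Q \<in> D \<Longrightarrow> w \<in> verts Q \<Longrightarrow> w \<noteq> m" using m_fresh by blast

lemma m_V: "m \<notin> V1" "m \<notin> V2" using m_old[OF H_in] V12 by auto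

lemma H1_new: "H1 \<notin> D" and H2_new: "H2 \<notin> D" using m_fresh verts_H1 verts_H2 by blast+

lemma H1_H2: "H1 \<noteq> H2"
proof
  assume "H1 = H2"
  then have "insert m V1 = insert m V2" using verts_H1 verts_H2 by simp
  then have "V1 = V2" using m_V insert_ident by metis
  then show False using V12 by blast
qed

lemma D'_iff: "Q \<in> D' \<longleftrightarrow> Q = H1 \<or> Q = H2 \<or> (Q \<in> D \<and> Q \<noteq> H)"
  unfolding D'_def by blast

lemma adj_H: "adj H x y \<Longrightarrow> adj H y x \<and> x \<in> verts H \<and> y \<in> verts H \<and> x \<noteq> y"
  using dec_inv_adj[OF inv H_in] by blast

lemma nbrs_V2: "u \<in> nbrs H V2 \<longleftrightarrow> u \<in> V1 \<and> (\<exists>w\<in>V2. adj H u w)"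
  using adj_H V12 unfolding nbrs_def nbr_def by blast

lemma swapped: "decomp_step G D H V2 V1 m"
proof
  show "is_split H V2 V1" using split_sym[OF split] adj_H by blast
qed (use simple inv H_in m_G m_fresh in auto)

lemma H1_H2_rel: "P \<noteq> H1 \<Longrightarrow> P \<noteq> H2 \<Longrightarrow>
    (H1, H2) \<in> tree_rel_without D' P \<and> (H2, H1) \<in> tree_rel_without D' P"
  using H1_H2 verts_H1 verts_H2 unfolding tree_rel_without_iff D'_iff by auto

definition merge :: "'a graph \<Rightarrow> 'a graph" where
  "merge X = (if X = H1 \<or> X = H2 then H else X)"

lemma merge_in: "X \<in> D' \<Longrightarrow> merge X \<in> D"
  using H_in unfolding merge_def D'_iff by auto

lemma merge_verts: "X \<in> D' \<Longrightarrow> w \<in> verts X \<Longrightarrow> w \<noteq> m \<Longrightarrow> w \<in> verts (merge X)"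
  using verts_H1 verts_H2 V12(1) unfolding merge_def D'_iff by auto

lemma merge_preimage:
  assumes "Q \<in> D" "w \<in> verts Q" shows "\<exists>Y\<in>D'. merge Y = Q \<and> w \<in> verts Y"
proof (cases "Q = H")
  case True
  have "H1 \<in> D'" "H2 \<in> D'" "merge H1 = H" "merge H2 = H" unfolding D'_iff merge_def by auto
  moreover have "w \<in> verts H1 \<or> w \<in> verts H2" using assms(2) True V12(1) verts_H1 verts_H2 by blast
  ultimately show ?thesis using True by blast
next
  case False
  then have "Q \<in> D'" "merge Q = Q" using assms H1_new H2_new unfolding merge_def D'_iff by auto
  then show ?thesis using assms(2) by blast
qed

lemma merge_other: "P \<in> D \<Longrightarrow> P \<noteq> H \<Longrightarrow> X \<in> D' \<Longrightarrow> X \<noteq> P \<Longrightarrow> merge X \<noteq> P"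
  unfolding merge_def by auto

lemma merge_rel:
  assumes P: "P \<in> D" "P \<noteq> H" and AB: "(A, B) \<in> tree_rel_without D' P"
  shows "merge A = merge B \<or> (merge A, merge B) \<in> tree_rel_without D P"
proof (cases "merge A = merge B")
  case False
  obtain w where AB': "A \<in> D'" "B \<in> D'" "A \<noteq> P" "B \<noteq> P" "w \<in> verts A" "w \<in> verts B"
    using AB unfolding tree_rel_without_iff by blast
  have "A \<in> D \<or> B \<in> D" using False AB'(1,2) unfolding merge_def D'_iff by auto
  then have "w \<noteq> m" using m_old AB'(5,6) by blast
  then have "w \<in> verts (merge A)" "w \<in> verts (merge B)" using merge_verts AB' by blast+
  then show ?thesis using False merge_in merge_other[OF P] AB' unfolding tree_rel_without_iff by blast
qed simp

lemma merge_H: "X \<in> D' \<Longrightarrow> merge X = H \<longleftrightarrow> X = H1 \<or> X = H2"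
  unfolding merge_def D'_iff by auto

lemma merge_linked:
  assumes "X \<in> D'" "Y \<in> D'" "merge X = merge Y" "P \<noteq> H1" "P \<noteq> H2"
  shows "(X, Y) \<in> (tree_rel_without D' P)\<^sup>*"
proof (cases "merge X = H")
  case True
  then have "X = H1 \<or> X = H2" "Y = H1 \<or> Y = H2" using assms(1-3) merge_H by metis+
  then show ?thesis using H1_H2_rel[OF assms(4,5)] by (auto intro: r_into_rtrancl)
next
  case False
  then have "X = Y" using assms(3) unfolding merge_def by (auto split: if_splits)
  then show ?thesis by simp
qed

lemma reach_merge:
  assumes P: "P \<in> D" "P \<noteq> H" "u \<in> verts P" and R: "R \<in> reach_parts D' P u"
  shows "merge R \<in> reach_parts D P u"
  using R
proof (induction rule: reach_parts_induct)
  case (base Q)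
  have "u \<in> verts (merge Q)" using merge_verts[OF base(1,3)] m_old[OF P(1,3)] by blast
  then show ?case by (rule reach_parts_base[OF merge_in[OF base(1)] merge_other[OF P(1,2) base(1,2)]])
next
  case (step A B)
  from merge_rel[OF P(1,2) step(2)] show ?case
  proof
    assume "merge A = merge B" then show ?case using step(1) by simp
  qed (rule reach_parts_step[OF step(1)])
qed

lemma reach_lift:
  assumes P: "P \<in> D" "P \<noteq> H" "u \<in> verts P" and R: "R \<in> reach_parts D P u"
  shows "\<forall>X\<in>D'. merge X = R \<longrightarrow> X \<in> reach_parts D' P u"
  using R
proof (induction rule: reach_parts_induct)
  have P_new: "P \<noteq> H1" "P \<noteq> H2" using P(1) H1_new H2_new by auto
  case (base Q)
  obtain Y where Y: "Y \<in> D'" "merge Y = Q" "u \<in> verts Y" using merge_preimage[OF base(1,3)] by blast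
  have "Y \<noteq> P" using Y(2) base(2) P_new unfolding merge_def by auto
  then have Y_reach: "Y \<in> reach_parts D' P u" using reach_parts_base[OF Y(1) _ Y(3)] by simp
  show ?case
  proof (intro ballI impI)
    fix X assume "X \<in> D'" "merge X = Q"
    then have "(Y, X) \<in> (tree_rel_without D' P)\<^sup>*" using merge_linked[OF Y(1) _ _ P_new] Y(2) by simp
    then show "X \<in> reach_parts D' P u" by (rule reach_parts_rtrancl[OF Y_reach])
  qed
next
  have P_new: "P \<noteq> H1" "P \<noteq> H2" using P(1) H1_new H2_new by auto
  case (step A B)
  obtain w where AB: "A \<in> D" "B \<in> D" "A \<noteq> P" "B \<noteq> P" "A \<noteq> B" "w \<in> verts A" "w \<in> verts B"
    using step(2) unfolding tree_rel_without_iff by blast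
  obtain YA where YA: "YA \<in> D'" "merge YA = A" "w \<in> verts YA" using merge_preimage AB(1,6) by blast
  obtain YB where YB: "YB \<in> D'" "merge YB = B" "w \<in> verts YB" using merge_preimage AB(2,7) by blast
  have "YA \<noteq> P" "YB \<noteq> P" using YA(2) YB(2) AB(3,4) P_new unfolding merge_def by auto
  then have rel: "(YA, YB) \<in> tree_rel_without D' P"
    using YA YB AB(5) unfolding tree_rel_without_iff by auto
  have YA_reach: "YA \<in> reach_parts D' P u" using step(1) YA(1,2) by simp
  have YB_reach: "YB \<in> reach_parts D' P u" by (rule reach_parts_step[OF YA_reach rel])
  show ?case
  proof (intro ballI impI)
    fix X assume "X \<in> D'" "merge X = B"
    then have "(YB, X) \<in> (tree_rel_without D' P)\<^sup>*" using merge_linked[OF YB(1) _ _ P_new] YB(2) by simp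
    then show "X \<in> reach_parts D' P u" by (rule reach_parts_rtrancl[OF YB_reach])
  qed
qed

lemma tot_other_part:
  assumes P: "P \<in> D" "P \<noteq> H" "u \<in> verts P"
  shows "tot G D' P u = tot G D P u"
proof (cases "u \<in> verts G")
  case False
  have "verts G \<inter> \<Union>(verts ` reach_parts D' P u) = verts G \<inter> \<Union>(verts ` reach_parts D P u)"
  proof (intro equalityI subsetI)
    fix x assume "x \<in> verts G \<inter> \<Union>(verts ` reach_parts D' P u)"
    then obtain R where x: "x \<in> verts G" "R \<in> reach_parts D' P u" "x \<in> verts R" by blast
    have "R \<in> D'" using reach_parts_mem[OF x(2)] D'_iff by blast
    then have "x \<in> verts (merge R)" using merge_verts x(3) m_G x(1) by blast
    then show "x \<in> verts G \<inter> \<Union>(verts ` reach_parts D P u)"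
      using reach_merge[OF P x(2)] x(1) by blast
  next
    fix x assume "x \<in> verts G \<inter> \<Union>(verts ` reach_parts D P u)"
    then obtain R where x: "x \<in> verts G" "R \<in> reach_parts D P u" "x \<in> verts R" by blast
    obtain Y where "Y \<in> D'" "merge Y = R" "x \<in> verts Y"
      using merge_preimage reach_parts_mem[OF x(2)] x(3) by blast
    then show "x \<in> verts G \<inter> \<Union>(verts ` reach_parts D' P u)"
      using reach_lift[OF P x(2)] x(1) by blast
  qed
  then show ?thesis using False by (simp add: tot_reach_parts)
qed (simp add: tot_reach_parts)

lemma D'_cases: "Q \<in> D' \<Longrightarrow> Q \<noteq> H1 \<Longrightarrow> Q \<noteq> H2 \<Longrightarrow> Q \<in> D \<and> Q \<noteq> H"
  unfolding D'_iff by blast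

lemma old_in_D': "Q \<in> D \<Longrightarrow> Q \<noteq> H \<Longrightarrow> Q \<in> D'" and H2_in_D': "H2 \<in> D'"
  unfolding D'_iff by auto

text \<open>The parts reachable from a non-real vertex u of H, avoiding H, meet H only in u:
  otherwise tot w would be contained in tot u for another vertex w of H.\<close>

lemma reach_parts_avoid_H:
  assumes u: "u \<in> verts H" "u \<notin> verts G" and X: "X \<in> reach_parts D H u" "w \<in> verts X" "w \<in> verts H"
  shows "w = u"
proof (rule ccontr)
  assume wu: "w \<noteq> u"
  have XD: "X \<in> D" "X \<noteq> H" using reach_parts_mem[OF X(1)] by auto
  show False
  proof (cases "w \<in> verts G")
    case True
    have "X = H" by (rule dec_inv_unique[OF inv True XD(1) H_in X(2,3)])
    then show False using XD by simp
  next
    case False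
    have "reach_parts D H w \<subseteq> reach_parts D H u" using reach_parts_mono[OF X(1,2)] .
    then have "tot G D H w \<subseteq> tot G D H u" using False u(2) by (auto simp: tot_reach_parts)
    moreover have "tot G D H w \<noteq> {}" using tot_nonempty[OF inv H_in X(3)] .
    moreover have "tot G D H w \<inter> tot G D H u = {}" using tot_disjoint[OF inv H_in X(3) u(1) wu] .
    ultimately show False by blast
  qed
qed

lemma reach_H1_old_vertex:
  assumes u: "u \<in> V1" "u \<notin> verts G" and R: "R' \<in> reach_parts D' H1 u"
  shows "R' \<in> D \<and> R' \<noteq> H \<and> R' \<in> reach_parts D H u"
proof (rule reach_parts_induct[where \<Phi>="\<lambda>X. X \<in> D \<and> X \<noteq> H \<and> X \<in> reach_parts D H u", OF R])
  have uH: "u \<in> verts H" using u(1) V12(1) by auto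
  fix Q assume Q: "Q \<in> D'" "Q \<noteq> H1" "u \<in> verts Q"
  have "u \<notin> verts H2" using u(1) m_V(1) V12(2) verts_H2 by auto
  then have "Q \<noteq> H2" using Q(3) by auto
  then have Qo: "Q \<in> D \<and> Q \<noteq> H" using D'_cases Q(1,2) by blast
  then show "Q \<in> D \<and> Q \<noteq> H \<and> Q \<in> reach_parts D H u" using reach_parts_base[of Q D H u] Q(3) by blast
next
  have uH: "u \<in> verts H" using u(1) V12(1) by auto
  fix A B assume A: "A \<in> D \<and> A \<noteq> H \<and> A \<in> reach_parts D H u" and AB: "(A, B) \<in> tree_rel_without D' H1"
  from AB have AB': "A \<in> D'" "B \<in> D'" "A \<noteq> H1" "B \<noteq> H1" "A \<noteq> B" "verts A \<inter> verts B \<noteq> {}"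
    unfolding tree_rel_without_iff by auto
  then obtain w where w: "w \<in> verts A" "w \<in> verts B" by blast
  have "B \<noteq> H2"
  proof
    assume "B = H2"
    have "w \<noteq> m" using m_old[of A w] w(1) A by blast
    then have "w \<in> V2" using w(2) \<open>B = H2\<close> verts_H2 by blast
    then have "w \<in> verts H" using V12(1) by auto
    then have "w = u" using reach_parts_avoid_H[OF uH u(2) _ w(1)] A by simp
    then show False using \<open>w \<in> V2\<close> u(1) V12(2) by auto
  qed
  then have Bo: "B \<in> D" "B \<noteq> H" using AB'(2,4) D'_cases by auto
  have "(A, B) \<in> tree_rel_without D H" using A Bo AB'(5,6) unfolding tree_rel_without_iff by blast
  then have "B \<in> reach_parts D H u" using reach_parts_step[of A D H u B] A by simp
  then show "B \<in> D \<and> B \<noteq> H \<and> B \<in> reach_parts D H u" using Bo by simp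
qed

lemma reach_old_vertex_H1:
  assumes R: "R \<in> reach_parts D H u"
  shows "R \<in> reach_parts D' H1 u"
proof (rule reach_parts_induct[where \<Phi>="\<lambda>X. X \<in> reach_parts D' H1 u", OF R])
  fix Q assume Q: "Q \<in> D" "Q \<noteq> H" "u \<in> verts Q"
  have "Q \<in> D'" "Q \<noteq> H1" using old_in_D'[OF Q(1,2)] H1_new Q(1) by auto
  then show "Q \<in> reach_parts D' H1 u" using reach_parts_base[OF _ _ Q(3)] by blast
next
  fix A B assume A: "A \<in> reach_parts D' H1 u" and AB: "(A, B) \<in> tree_rel_without D H"
  from AB have AB': "A \<in> D" "B \<in> D" "A \<noteq> H" "B \<noteq> H" "A \<noteq> B" "verts A \<inter> verts B \<noteq> {}"
    unfolding tree_rel_without_iff by auto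
  have "A \<in> D'" "B \<in> D'" "A \<noteq> H1" "B \<noteq> H1" using AB' old_in_D' H1_new by auto
  then have "(A, B) \<in> tree_rel_without D' H1" using AB'(5,6) unfolding tree_rel_without_iff by blast
  then show "B \<in> reach_parts D' H1 u" using reach_parts_step[OF A] by blast
qed

lemma tot_H1_old_vertex:
  assumes u: "u \<in> V1"
  shows "tot G D' H1 u = tot G D H u"
proof (cases "u \<in> verts G")
  case True then show ?thesis by (simp add: tot_reach_parts)
next
  case False
  have "reach_parts D' H1 u = reach_parts D H u"
    using reach_H1_old_vertex[OF u False] reach_old_vertex_H1 by blast
  then show ?thesis using False by (simp add: tot_reach_parts)
qed

text \<open>The marker m of H1 represents everything on the V2 side:
  tot m with respect to H1 is the union of tot w, w in V2, with respect to H.\<close>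

lemma reach_H1_marker:
  assumes R: "R' \<in> reach_parts D' H1 m"
  shows "R' = H2 \<or> (R' \<in> D \<and> R' \<noteq> H \<and> (\<exists>w\<in>V2. w \<notin> verts G \<and> R' \<in> reach_parts D H w))"
proof (rule reach_parts_induct[where \<Phi>="\<lambda>X. X = H2 \<or> (X \<in> D \<and> X \<noteq> H \<and> (\<exists>w\<in>V2. w \<notin> verts G \<and> X \<in> reach_parts D H w))", OF R])
  fix Q assume Q: "Q \<in> D'" "Q \<noteq> H1" "m \<in> verts Q"
  have "Q \<notin> D" using Q(3) m_fresh by blast
  then have "Q = H2" using Q(1,2) D'_cases by blast
  then show "Q = H2 \<or> (Q \<in> D \<and> Q \<noteq> H \<and> (\<exists>w\<in>V2. w \<notin> verts G \<and> Q \<in> reach_parts D H w))"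
    by simp
next
  fix A B
  assume A: "A = H2 \<or> (A \<in> D \<and> A \<noteq> H \<and> (\<exists>w\<in>V2. w \<notin> verts G \<and> A \<in> reach_parts D H w))"
    and AB: "(A, B) \<in> tree_rel_without D' H1"
  from AB have AB': "A \<in> D'" "B \<in> D'" "A \<noteq> H1" "B \<noteq> H1" "A \<noteq> B" "verts A \<inter> verts B \<noteq> {}"
    unfolding tree_rel_without_iff by auto
  then obtain w where w: "w \<in> verts A" "w \<in> verts B" by blast
  show "B = H2 \<or> (B \<in> D \<and> B \<noteq> H \<and> (\<exists>w\<in>V2. w \<notin> verts G \<and> B \<in> reach_parts D H w))"
  proof (cases "B = H2")
    case True then show ?thesis by simp
  next
    case False
    then have Bo: "B \<in> D" "B \<noteq> H" using AB'(2,4) D'_cases by auto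
    have wm: "w \<noteq> m" using m_old[OF Bo(1) w(2)] .
    show ?thesis
    proof (cases "A = H2")
      case True
      then have wV2: "w \<in> V2" using w(1) wm verts_H2 by blast
      then have wH: "w \<in> verts H" using V12(1) by auto
      have "w \<notin> verts G"
      proof
        assume "w \<in> verts G"
        then have "B = H" using dec_inv_unique[OF inv _ Bo(1) H_in w(2) wH] by blast
        then show False using Bo by simp
      qed
      moreover have "B \<in> reach_parts D H w" using reach_parts_base[OF Bo(1) Bo(2) w(2)] .
      ultimately show ?thesis using Bo wV2 by blast
    next
      case AF: False
      then obtain w0 where w0: "w0 \<in> V2" "w0 \<notin> verts G" "A \<in> reach_parts D H w0" and Ao: "A \<in> D" "A \<noteq> H"
        using A by blast
      have "(A, B) \<in> tree_rel_without D H" using Ao Bo AB'(5,6) unfolding tree_rel_without_iff by blast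
      then have "B \<in> reach_parts D H w0" using reach_parts_step[OF w0(3)] by blast
      then show ?thesis using Bo w0 by blast
    qed
  qed
qed

lemma H2_reach_marker: "H2 \<in> reach_parts D' H1 m"
  using reach_parts_base[OF H2_in_D' H1_H2[symmetric]] verts_H2 by blast

lemma reach_V2_marker:
  assumes w: "w \<in> V2" and R: "R \<in> reach_parts D H w"
  shows "R \<in> reach_parts D' H1 m"
proof (rule reach_parts_induct[where \<Phi>="\<lambda>X. X \<in> reach_parts D' H1 m", OF R])
  fix Q assume Q: "Q \<in> D" "Q \<noteq> H" "w \<in> verts Q"
  have QD': "Q \<in> D'" "Q \<noteq> H1" "Q \<noteq> H2" using old_in_D'[OF Q(1,2)] H1_new H2_new Q(1) by auto
  have "w \<in> verts H2" using w verts_H2 by blast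
  then have "(H2, Q) \<in> tree_rel_without D' H1"
    using QD'(1,2) QD'(3)[symmetric] H2_in_D' H1_H2[symmetric] Q(3) unfolding tree_rel_without_iff by blast
  then show "Q \<in> reach_parts D' H1 m" using reach_parts_step[OF H2_reach_marker] by blast
next
  fix A B assume A: "A \<in> reach_parts D' H1 m" and AB: "(A, B) \<in> tree_rel_without D H"
  from AB have AB': "A \<in> D" "B \<in> D" "A \<noteq> H" "B \<noteq> H" "A \<noteq> B" "verts A \<inter> verts B \<noteq> {}"
    unfolding tree_rel_without_iff by auto
  have "A \<in> D'" "B \<in> D'" "A \<noteq> H1" "B \<noteq> H1" using AB' old_in_D' H1_new by auto
  then have "(A, B) \<in> tree_rel_without D' H1" using AB'(5,6) unfolding tree_rel_without_iff by blast
  then show "B \<in> reach_parts D' H1 m" using reach_parts_step[OF A] by blast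
qed

lemma tot_H1_marker: "tot G D' H1 m = (\<Union>w\<in>V2. tot G D H w)"
proof -
  have "verts G \<inter> \<Union>(verts ` reach_parts D' H1 m) = (\<Union>w\<in>V2. tot G D H w)"
  proof (intro equalityI subsetI)
    fix x assume "x \<in> verts G \<inter> \<Union>(verts ` reach_parts D' H1 m)"
    then obtain R' where x: "x \<in> verts G" "R' \<in> reach_parts D' H1 m" "x \<in> verts R'" by blast
    from reach_H1_marker[OF x(2)] show "x \<in> (\<Union>w\<in>V2. tot G D H w)"
    proof
      assume "R' = H2"
      then have "x \<in> V2" using x(1,3) verts_H2 m_G by auto
      then show ?thesis using x(1) by (auto simp: tot_reach_parts)
    next
      assume "R' \<in> D \<and> R' \<noteq> H \<and> (\<exists>w\<in>V2. w \<notin> verts G \<and> R' \<in> reach_parts D H w)"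
      then obtain w where "w \<in> V2" "w \<notin> verts G" "R' \<in> reach_parts D H w" by blast
      then show ?thesis using x by (auto simp: tot_reach_parts)
    qed
  next
    fix x assume "x \<in> (\<Union>w\<in>V2. tot G D H w)"
    then obtain w where w: "w \<in> V2" "x \<in> tot G D H w" by blast
    show "x \<in> verts G \<inter> \<Union>(verts ` reach_parts D' H1 m)"
    proof (cases "w \<in> verts G")
      case True
      then have "x = w" using w(2) by (simp add: tot_reach_parts)
      then have "x \<in> verts H2" using w(1) verts_H2 by blast
      then show ?thesis using H2_reach_marker True \<open>x = w\<close> by blast
    next
      case False
      then obtain R where R: "R \<in> reach_parts D H w" "x \<in> verts R" "x \<in> verts G" using w(2) by (auto simp: tot_reach_parts)
      then show ?thesis using reach_V2_marker[OF w(1) R(1)] by blast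
    qed
  qed
  then show ?thesis using m_G by (simp add: tot_reach_parts)
qed

text \<open>H1 is well formed: connected since every vertex of V1 reaches the marker.\<close>

lemma adj_H1_props: "adj H1 x y \<Longrightarrow> adj H1 y x \<and> x \<in> verts H1 \<and> y \<in> verts H1 \<and> x \<noteq> y"
proof -
  assume a: "adj H1 x y"
  then consider (a) "x \<in> V1 \<and> y \<in> V1 \<and> adj H x y" | (b) "x = m \<and> y \<in> nbrs H V2" | (c) "y = m \<and> x \<in> nbrs H V2"
    using adj_H1 by blast
  then show ?thesis
  proof cases
    case a then show ?thesis using adj_H[of x y] adj_H1 verts_H1 by auto
  next
    case b then have "y \<in> V1" using nbrs_V2 by blast
    then show ?thesis using b adj_H1 verts_H1 m_V by auto
  next
    case c then have "x \<in> V1" using nbrs_V2 by blast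
    then show ?thesis using c adj_H1 verts_H1 m_V by auto
  qed
qed

lemma path_in_H1:
  assumes "(x, z) \<in> {(u, v). adj H u v}\<^sup>*" "x \<in> V1"
  shows "(z \<in> V1 \<and> (x, z) \<in> {(u, v). adj H1 u v}\<^sup>*) \<or> (x, m) \<in> {(u, v). adj H1 u v}\<^sup>*"
  using assms(1)
proof (induction rule: rtrancl_induct)
  case base then show ?case using assms(2) by simp
next
  case (step y z)
  from step.IH show ?case
  proof
    assume y: "y \<in> V1 \<and> (x, y) \<in> {(u, v). adj H1 u v}\<^sup>*"
    have yz: "adj H y z" using step(2) by simp
    then have "z \<in> verts H" using adj_H by blast
    then have "z \<in> V1 \<or> z \<in> V2" using V12(1) by auto
    then show ?thesis
    proof
      assume "z \<in> V1"
      then have "(y, z) \<in> {(u, v). adj H1 u v}" using y yz adj_H1 by simp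
      then show ?thesis using y \<open>z \<in> V1\<close> by (meson rtrancl.rtrancl_into_rtrancl)
    next
      assume "z \<in> V2"
      then have "y \<in> nbrs H V2" using nbrs_V2 y yz by blast
      then have "(y, m) \<in> {(u, v). adj H1 u v}" using adj_H1 by simp
      then show ?thesis using y by (meson rtrancl.rtrancl_into_rtrancl)
    qed
  qed simp
qed

lemma wf_part_H1: "wf_part H1"
proof -
  have s: "\<forall>x y. adj H1 x y \<longrightarrow> adj H1 y x" using adj_H1_props by blast
  have HC: "connected H" using dec_inv_connected[OF inv H_in] .
  obtain z where z: "z \<in> V2" using V12(4) by blast
  have zH: "z \<in> verts H" using z V12(1) by auto
  have xm: "(x, m) \<in> {(u, v). adj H1 u v}\<^sup>*" if x: "x \<in> V1" for x
  proof -
    have "x \<in> verts H" using x V12(1) by auto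
    then have "(x, z) \<in> {(u, v). adj H u v}\<^sup>*" using HC zH unfolding connected_def by blast
    from path_in_H1[OF this x] show ?thesis using z V12(2) by blast
  qed
  have mx: "(m, x) \<in> {(u, v). adj H1 u v}\<^sup>*" if x: "x \<in> V1" for x
    using rtrancl_adj_sym[OF s xm[OF x]] .
  have "\<forall>x\<in>verts H1. \<forall>y\<in>verts H1. (x, y) \<in> {(u, v). adj H1 u v}\<^sup>*"
  proof (intro ballI)
    fix x y assume "x \<in> verts H1" "y \<in> verts H1"
    then have "x = m \<or> x \<in> V1" "y = m \<or> y \<in> V1" using verts_H1 by auto
    then have "(x, m) \<in> {(u, v). adj H1 u v}\<^sup>*" "(m, y) \<in> {(u, v). adj H1 u v}\<^sup>*"
      using xm mx by auto
    then show "(x, y) \<in> {(u, v). adj H1 u v}\<^sup>*" by (rule rtrancl_trans)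
  qed
  moreover have "verts H1 \<noteq> {}" using verts_H1 by simp
  ultimately show ?thesis unfolding wf_part_def connected_def using adj_H1_props by blast
qed

lemma act_H1_old_vertex: "u \<in> V1 \<Longrightarrow> act G D' H1 u = act G D H u"
  by (simp add: act_def tot_H1_old_vertex)

lemma act_H1_marker: "act G D' H1 m = nbrs G (verts G - (\<Union>w\<in>V2. tot G D H w))"
  by (simp add: act_def tot_H1_marker)

lemma tot_V1_V2_disjoint: "u \<in> V1 \<Longrightarrow> w \<in> V2 \<Longrightarrow> tot G D H u \<inter> tot G D H w = {}"
proof -
  assume "u \<in> V1" "w \<in> V2"
  moreover then have "u \<noteq> w" "u \<in> verts H" "w \<in> verts H" using V12 by auto
  ultimately show ?thesis using tot_disjoint[OF inv H_in] by blast
qed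

lemma adj_to_marker:
  assumes u: "u \<in> V1" and x: "x \<in> tot G D H u" and y: "y \<in> (\<Union>w\<in>V2. tot G D H w)"
  shows "adj G x y \<longleftrightarrow> adj H1 u m \<and> x \<in> act G D H u \<and> y \<in> nbrs G (verts G - (\<Union>w\<in>V2. tot G D H w))"
proof -
  let ?S = "\<Union>w\<in>V2. tot G D H w"
  obtain w where w: "w \<in> V2" "y \<in> tot G D H w" using y by blast
  have uH: "u \<in> verts H" "w \<in> verts H" "u \<noteq> w" using u w V12 by auto
  have xV: "x \<in> verts G" "y \<in> verts G" using subsetD[OF tot_subset x] subsetD[OF tot_subset w(2)] by simp_all
  have xS: "x \<notin> ?S" using tot_V1_V2_disjoint[OF u] x by blast
  have sG: "\<And>a b. adj G a b \<Longrightarrow> adj G b a" using simple unfolding simple_graph_def by blast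
  show ?thesis
  proof
    assume a: "adj G x y"
    then have h: "adj H u w \<and> x \<in> act G D H u \<and> y \<in> act G D H w"
      using tot_adj[OF inv H_in uH(1,2,3) x w(2)] by blast
    then have "u \<in> nbrs H V2" using nbrs_V2 u w(1) by blast
    then have "adj H1 u m" using adj_H1 by simp
    moreover have "y \<in> nbrs G (verts G - ?S)"
      using nbrs_compl_iff[OF simple] xV xS sG[OF a] y by blast
    ultimately show "adj H1 u m \<and> x \<in> act G D H u \<and> y \<in> nbrs G (verts G - ?S)" using h by blast
  next
    assume a: "adj H1 u m \<and> x \<in> act G D H u \<and> y \<in> nbrs G (verts G - ?S)"
    then have "u \<in> nbrs H V2" using adj_H1 m_V by auto
    then obtain w0 where w0: "w0 \<in> V2" "adj H u w0" using nbrs_V2 by blast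
    obtain z where z: "z \<in> verts G - ?S" "adj G y z" using a nbrs_compl_iff[OF simple] by blast
    obtain u' where u': "u' \<in> verts H" "z \<in> tot G D H u'" using tot_cover[OF inv H_in] z(1) by blast
    have "u' \<notin> V2" using u' z(1) by blast
    then have u'1: "u' \<in> V1" using u'(1) V12(1) by auto
    have "w \<noteq> u'" using u'1 w(1) V12(2) by auto
    then have h2: "adj H w u' \<and> y \<in> act G D H w" using tot_adj[OF inv H_in uH(2) u'(1) _ w(2) u'(2)] z(2) by blast
    then have "adj H u w" using split_complete[OF split _ u w(1) w0 u'1] adj_H by blast
    then show "adj G x y" using tot_adj[OF inv H_in uH(1,2,3) x w(2)] a h2 by blast
  qed
qed

lemma tot_H1_nonempty: "u \<in> verts H1 \<Longrightarrow> tot G D' H1 u \<noteq> {}"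
proof -
  assume "u \<in> verts H1"
  then consider (old) "u \<in> V1" | (marker) "u = m" using verts_H1 by blast
  then show "tot G D' H1 u \<noteq> {}"
  proof cases
    case old
    then show ?thesis using tot_H1_old_vertex tot_nonempty[OF inv H_in] V12(1) by auto
  next
    case marker
    obtain w where "w \<in> V2" using V12(4) by blast
    then have "tot G D H w \<noteq> {}" using tot_nonempty[OF inv H_in] V12(1) by blast
    then show ?thesis using marker tot_H1_marker \<open>w \<in> V2\<close> by blast
  qed
qed

lemma tot_H1_disjoint:
  assumes "u \<in> verts H1" "v \<in> verts H1" "u \<noteq> v"
  shows "tot G D' H1 u \<inter> tot G D' H1 v = {}"
proof -
  consider (old) "u \<in> V1" "v \<in> V1" | (marker_u) "u = m" "v \<in> V1" | (marker_v) "u \<in> V1" "v = m"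
    using assms verts_H1 by auto
  then show ?thesis
  proof cases
    case old
    then show ?thesis using tot_H1_old_vertex tot_disjoint[OF inv H_in _ _ assms(3)] V12(1) by auto
  qed (use tot_H1_old_vertex tot_H1_marker tot_V1_V2_disjoint in blast)+
qed

lemma tot_H1_cover: "verts G \<subseteq> (\<Union>u\<in>verts H1. tot G D' H1 u)"
proof
  fix x assume "x \<in> verts G"
  then obtain u where u: "u \<in> verts H" "x \<in> tot G D H u" using tot_cover[OF inv H_in] by blast
  then have "u \<in> V1 \<or> u \<in> V2" using V12(1) by auto
  then show "x \<in> (\<Union>u\<in>verts H1. tot G D' H1 u)"
    using u tot_H1_old_vertex tot_H1_marker verts_H1 by auto
qed

lemma tot_H1_adj:
  assumes uv: "u \<in> verts H1" "v \<in> verts H1" "u \<noteq> v"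
    and x: "x \<in> tot G D' H1 u" and y: "y \<in> tot G D' H1 v"
  shows "adj G x y \<longleftrightarrow> adj H1 u v \<and> x \<in> act G D' H1 u \<and> y \<in> act G D' H1 v"
proof -
  let ?S = "\<Union>w\<in>V2. tot G D H w"
  have in_H: "\<And>u. u \<in> V1 \<Longrightarrow> u \<in> verts H" using V12(1) by auto
  consider (old) "u \<in> V1" "v \<in> V1" | (marker_u) "u = m" "v \<in> V1" | (marker_v) "u \<in> V1" "v = m"
    using uv verts_H1 by auto
  then show ?thesis
  proof cases
    case old
    have "adj H1 u v = adj H u v" using old adj_H1 m_V by auto
    then show ?thesis using tot_adj[OF inv H_in in_H[OF old(1)] in_H[OF old(2)] uv(3)] x y
        tot_H1_old_vertex act_H1_old_vertex old by simp
  next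
    case marker_u
    have "adj G y x \<longleftrightarrow> adj H1 v m \<and> y \<in> act G D H v \<and> x \<in> nbrs G (verts G - ?S)"
      using adj_to_marker[OF marker_u(2)] x y marker_u tot_H1_old_vertex tot_H1_marker by simp
    moreover have "adj H1 v m = adj H1 m v" using adj_H1 m_V by auto
    moreover have "adj G y x = adj G x y" using simple unfolding simple_graph_def by blast
    ultimately show ?thesis using marker_u act_H1_old_vertex act_H1_marker by auto
  next
    case marker_v
    then show ?thesis using adj_to_marker[OF marker_v(1)] x y tot_H1_old_vertex tot_H1_marker
        act_H1_old_vertex act_H1_marker by simp
  qed
qed

lemma faithful_H1: "faithful G D' H1"
  unfolding faithful_def using tot_H1_nonempty tot_H1_disjoint tot_H1_cover tot_H1_adj by blast

lemma unique_step:
  assumes "v \<in> verts G" "Q1 \<in> D'" "Q2 \<in> D'" "v \<in> verts Q1" "v \<in> verts Q2"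
  shows "Q1 = Q2"
proof -
  have "v \<noteq> m" using assms(1) m_G by blast
  then have "v \<in> verts (merge Q1)" "v \<in> verts (merge Q2)" using merge_verts assms by blast+
  then have "merge Q1 = merge Q2"
    using dec_inv_unique[OF inv assms(1) merge_in[OF assms(2)] merge_in[OF assms(3)]] by blast
  moreover have "v \<in> V1" if "Q = H1" "v \<in> verts Q" for Q using that verts_H1 \<open>v \<noteq> m\<close> by auto
  moreover have "v \<in> V2" if "Q = H2" "v \<in> verts Q" for Q using that verts_H2 \<open>v \<noteq> m\<close> by auto
  ultimately show ?thesis using V12(2) assms(2-5) merge_H unfolding merge_def
    by (metis disjoint_iff)
qed

text \<open>The invariant is preserved: H2 is handled by the symmetric step, and the old
  parts keep their sets tot.\<close>

lemma dec_inv_step: "dec_inv G D'"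
proof -
  interpret sw: decomp_step G D H V2 V1 m by (rule swapped)
  have swH: "sw.H1 = H2" "sw.H2 = H1" by (simp_all add: sw.H1_def sw.H2_def H1_def H2_def)
  have swD: "sw.D' = D'" unfolding sw.D'_def D'_def swH by (rule insert_commute)
  have "wf_part Q" if Q: "Q \<in> D'" for Q
  proof -
    have old: "\<forall>Q\<in>D. wf_part Q" using inv unfolding dec_inv_def by blast
    consider "Q = H1" | "Q = H2" | "Q \<in> D" using Q unfolding D'_iff by blast
    then show ?thesis using wf_part_H1 sw.wf_part_H1 swH old by cases simp_all
  qed
  moreover have "faithful G D' P" if P: "P \<in> D'" for P
  proof -
    consider "P = H1" | "P = H2" | "P \<in> D" "P \<noteq> H" using P unfolding D'_iff by blast
    then show ?thesis
    proof cases
      case 3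
      then have "faithful G D' P = faithful G D P" by (intro faithful_cong tot_other_part)
      then show ?thesis using dec_inv_faithful[OF inv 3(1)] by simp
    qed (use faithful_H1 sw.faithful_H1 swH swD in simp_all)
  qed
  ultimately show ?thesis unfolding dec_inv_def using unique_step by blast
qed

end

text \<open>Initially every vertex represents itself.\<close>

lemma dec_inv_initial:
  assumes simple: "simple_graph G" and conn: "connected G"
  shows "dec_inv G {G}"
proof -
  have tot: "\<And>u. u \<in> verts G \<Longrightarrow> tot G {G} G u = {u}" by (simp add: tot_reach_parts)
  have adj: "\<And>a b. adj G a b \<Longrightarrow> adj G b a \<and> a \<in> verts G \<and> b \<in> verts G \<and> a \<noteq> b"
    using simple unfolding simple_graph_def by blast
  have "faithful G {G} G"
    unfolding faithful_def
  proof (intro conjI ballI impI)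
    fix u v x y assume uv: "u \<in> verts G" "v \<in> verts G" "u \<noteq> v"
      and x: "x \<in> tot G {G} G u" and y: "y \<in> tot G {G} G v"
    have xy: "x = u" "y = v" using x y tot uv by auto
    show "adj G x y \<longleftrightarrow> adj G u v \<and> x \<in> act G {G} G u \<and> y \<in> act G {G} G v"
    proof
      assume a: "adj G x y"
      then have "u \<in> act G {G} G u" "v \<in> act G {G} G v"
        unfolding act_def using nbrs_compl_iff[OF simple] tot uv xy adj[OF a] by auto
      then show "adj G u v \<and> x \<in> act G {G} G u \<and> y \<in> act G {G} G v" using a xy by simp
    qed (simp add: xy)
  qed (use tot in auto)
  moreover have "wf_part G" unfolding wf_part_def using conn adj by blast
  ultimately show ?thesis unfolding dec_inv_def by auto
qed

lemma split_dec_inv: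
  assumes simple: "simple_graph G" and D: "split_dec G D"
  shows "dec_inv G D"
  using D
proof (induction rule: split_dec.induct)
  case base
  then show ?case using dec_inv_initial[OF simple] by blast
next
  case (step D H V1 V2 m)
  interpret s: decomp_step G D H V1 V2 m
    by (rule decomp_step.intro) (use step simple in auto)
  show ?case using s.dec_inv_step unfolding s.D'_def s.H1_def s.H2_def .
qed

lemma split_dec_connected: "split_dec G D \<Longrightarrow> connected G"
  by (induction rule: split_dec.induct) auto

section \<open>Matchings, and pulling back splits to prime parts\<close>

lemma mm_ge_complete:
  assumes fin: "finite (verts G)" and S: "S \<subseteq> A" "S' \<subseteq> verts G - A" "card S \<ge> k" "card S' \<ge> k"
    and adjS: "\<forall>s\<in>S. \<forall>s'\<in>S'. adj G s s'" and SV: "A \<subseteq> verts G"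
  shows "mm G A \<ge> k"
proof -
  obtain S0 where S0: "S0 \<subseteq> S" "card S0 = k" "finite S0" using obtain_subset_with_card_n[OF S(3)] by metis
  obtain S1 where S1: "S1 \<subseteq> S'" "card S1 = k" "finite S1" using obtain_subset_with_card_n[OF S(4)] by metis
  obtain h where h: "bij_betw h S0 S1" using finite_same_card_bij[OF S0(3) S1(3)] S0(2) S1(2) by auto
  define M where "M = (\<lambda>s. (s, h s)) ` S0"
  define X where "X = {(a, b). a \<in> A \<and> b \<in> verts G - A \<and> adj G a b}"
  have hS: "\<And>s. s \<in> S0 \<Longrightarrow> h s \<in> S'" using h S1(1) unfolding bij_betw_def by blast
  have MX: "M \<subseteq> X"
  proof
    fix p assume "p \<in> M"
    then obtain s where s: "s \<in> S0" "p = (s, h s)" unfolding M_def by blast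
    have "s \<in> S" using s S0(1) by blast
    moreover have "h s \<in> S'" using hS s(1) .
    ultimately have "s \<in> A" "h s \<in> verts G - A" "adj G s (h s)" using S(1,2) adjS by blast+
    then show "p \<in> X" unfolding X_def using s(2) by simp
  qed
  have i1: "inj_on fst M" unfolding M_def by (rule inj_onI) auto
  have i2: "inj_on snd M" unfolding M_def using h unfolding bij_betw_def inj_on_def by auto
  have cM: "card M = k" unfolding M_def using S0(2) by (subst card_image) (auto intro: inj_onI)
  have XV: "X \<subseteq> verts G \<times> verts G" unfolding X_def using SV S by auto
  have "X \<subseteq> verts G \<times> verts G" using XV .
  then have fX: "finite X" using fin finite_subset by blast
  have fin2: "finite {card M | M. M \<subseteq> X \<and> inj_on fst M \<and> inj_on snd M}"
  proof -
    have "{card M | M. M \<subseteq> X \<and> inj_on fst M \<and> inj_on snd M} \<subseteq> card ` Pow X" by blast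
    then show ?thesis using fX finite_subset by blast
  qed
  have "card M \<in> {card M | M. M \<subseteq> X \<and> inj_on fst M \<and> inj_on snd M}" using MX i1 i2 by blast
  then have "card M \<le> Max {card M | M. M \<subseteq> X \<and> inj_on fst M \<and> inj_on snd M}"
    using fin2 by (rule Max_ge[rotated])
  then show ?thesis unfolding mm_def X_def[symmetric] using cM by simp
qed

text \<open>In a faithful part with at least two vertices every vertex u is active: since G
  is connected, some edge of G leaves tot u, and its endpoint in tot u is active.\<close>

lemma act_nonempty:
  assumes sg: "simple_graph G" and cG: "connected G" and I: "dec_inv G D" and P: "P \<in> D"
    and uv: "u \<in> verts P" "v \<in> verts P" "u \<noteq> v"
  shows "act G D P u \<noteq> {}"
proof -
  let ?T = "tot G D P u"
  obtain t where t: "t \<in> ?T" using tot_nonempty[OF I P uv(1)] by blast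
  obtain s where s: "s \<in> tot G D P v" using tot_nonempty[OF I P uv(2)] by blast
  have sT: "s \<notin> ?T" using tot_disjoint[OF I P uv] s by blast
  have tV: "t \<in> verts G" "s \<in> verts G" using subsetD[OF tot_subset t] subsetD[OF tot_subset s] by simp_all
  have "(s, t) \<in> {(a, b). adj G a b}\<^sup>*" using cG tV unfolding connected_def by blast
  then have "t \<in> ?T \<longrightarrow> (\<exists>a b. a \<notin> ?T \<and> b \<in> ?T \<and> adj G a b)"
  proof (induction rule: rtrancl_induct)
    case base then show ?case using sT by simp
  next
    case (step y z)
    show ?case
    proof
      assume z: "z \<in> ?T"
      show "\<exists>a b. a \<notin> ?T \<and> b \<in> ?T \<and> adj G a b"
      proof (cases "y \<in> ?T")
        case True then show ?thesis using step.IH by blast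
      next
        case False then show ?thesis using z step(2) by blast
      qed
    qed
  qed
  then obtain a b' where ab: "a \<notin> ?T" "b' \<in> ?T" "adj G a b'" using t by blast
  have "adj G b' a \<and> a \<in> verts G \<and> b' \<in> verts G" using sg ab(3) unfolding simple_graph_def by blast
  then have "b' \<in> nbrs G (verts G - ?T)" using nbrs_compl_iff[OF sg] ab by blast
  then show ?thesis unfolding act_def by blast
qed

lemma representatives_adj:
  assumes inv: "dec_inv G D" and P: "P \<in> D" and r: "\<forall>v\<in>verts P. r v \<in> act G D P v"
    and xw: "x \<in> verts P" "w \<in> verts P" "x \<noteq> w"
  shows "w \<in> nbr P x \<longleftrightarrow> r w \<in> nbr G (r x)"
proof -
  have rT: "r v \<in> tot G D P v" if "v \<in> verts P" for v using subsetD[OF act_subset_tot bspec[OF r that]] .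
  have "adj G (r x) (r w) \<longleftrightarrow> adj P x w"
    using tot_adj[OF inv P xw rT[OF xw(1)] rT[OF xw(2)]] r xw(1,2) by auto
  then show ?thesis unfolding nbr_def using xw(2) subsetD[OF tot_subset rT[OF xw(2)]] by auto
qed

lemma two_le_card: "finite X \<Longrightarrow> a \<in> X \<Longrightarrow> b \<in> X \<Longrightarrow> a \<noteq> b \<Longrightarrow> card X \<ge> 2"
  using card_mono[of X "{a, b}"] by simp

text \<open>Pulling back a split of G: choosing one active representative r v for every
  vertex v of P, the split (A, V(G) - A) induces a split of P, provided both sides
  receive two representatives.\<close>

lemma split_from_representatives:
  assumes inv: "dec_inv G D" and P: "P \<in> D" "finite (verts P)"
    and split: "is_split G A (verts G - A)" and r: "\<forall>v\<in>verts P. r v \<in> act G D P v"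
    and p: "p1 \<in> verts P" "p2 \<in> verts P" "p1 \<noteq> p2" "r p1 \<in> A" "r p2 \<in> A"
    and q: "q1 \<in> verts P" "q2 \<in> verts P" "q1 \<noteq> q2" "r q1 \<notin> A" "r q2 \<notin> A"
  shows "is_split P {v\<in>verts P. r v \<in> A} {v\<in>verts P. r v \<notin> A}"
proof -
  let ?P1 = "{v\<in>verts P. r v \<in> A}" and ?P2 = "{v\<in>verts P. r v \<notin> A}"
  have rV: "r v \<in> verts G" if "v \<in> verts P" for v
    using subsetD[OF act_subset bspec[OF r that]] .
  have key: "w \<in> nbr P x \<longleftrightarrow> r w \<in> nbr G (r x) \<inter> (verts G - A)" if "x \<in> ?P1" "w \<in> ?P2" for x w
    using representatives_adj[OF inv P(1) r, of x w] that rV by auto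
  have "nbr P x \<inter> ?P2 \<subseteq> nbr P y \<inter> ?P2"
    if x: "x \<in> ?P1" and y: "y \<in> ?P1" and nx: "nbr P x \<inter> ?P2 \<noteq> {}" and ny: "nbr P y \<inter> ?P2 \<noteq> {}" for x y
  proof
    fix w assume w: "w \<in> nbr P x \<inter> ?P2"
    obtain w1 where "w1 \<in> nbr P x \<inter> ?P2" using nx by blast
    then have "nbr G (r x) \<inter> (verts G - A) \<noteq> {}" using key[OF x] by blast
    moreover obtain w2 where "w2 \<in> nbr P y \<inter> ?P2" using ny by blast
    then have "nbr G (r y) \<inter> (verts G - A) \<noteq> {}" using key[OF y] by blast
    moreover have "r x \<in> A" "r y \<in> A" using x y by auto
    ultimately have "nbr G (r x) \<inter> (verts G - A) = nbr G (r y) \<inter> (verts G - A)"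
      using split unfolding is_split_def by blast
    then show "w \<in> nbr P y \<inter> ?P2" using key[OF x] key[OF y] w by blast
  qed
  then have "\<forall>x\<in>?P1. \<forall>y\<in>?P1. nbr P x \<inter> ?P2 \<noteq> {} \<and> nbr P y \<inter> ?P2 \<noteq> {} \<longrightarrow>
        nbr P x \<inter> ?P2 = nbr P y \<inter> ?P2"
    by (meson subset_antisym)
  moreover have "card ?P1 \<ge> 2" "card ?P2 \<ge> 2"
    using two_le_card[of ?P1 p1 p2] two_le_card[of ?P2 q1 q2] p q P(2) by auto
  moreover have "connected P" using dec_inv_connected[OF inv P(1)] .
  moreover have "?P1 \<union> ?P2 = verts P" "?P1 \<inter> ?P2 = {}" by auto
  ultimately show ?thesis unfolding is_split_def by blast
qed

lemma representatives_exist: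
  assumes ne: "\<forall>v\<in>verts P. F v \<noteq> {}"
    and c: "c1 \<noteq> c2" "c1 \<noteq> c3" "c1 \<noteq> c4" "c2 \<noteq> c3" "c2 \<noteq> c4" "c3 \<noteq> c4"
    and z: "z1 \<in> F c1" "z2 \<in> F c2" "z3 \<in> F c3" "z4 \<in> F c4"
  shows "\<exists>r. (\<forall>v\<in>verts P. r v \<in> F v) \<and> r c1 = z1 \<and> r c2 = z2 \<and> r c3 = z3 \<and> r c4 = z4"
proof -
  define r where "r v = (if v = c1 then z1 else if v = c2 then z2 else if v = c3 then z3
      else if v = c4 then z4 else (SOME z. z \<in> F v))" for v
  have "\<forall>v\<in>verts P. r v \<in> F v"
  proof
    fix v assume v: "v \<in> verts P"
    show "r v \<in> F v"
    proof (cases "v = c1 \<or> v = c2 \<or> v = c3 \<or> v = c4")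
      case True then show ?thesis using z unfolding r_def by auto
    next
      case False
      then have "r v = (SOME z. z \<in> F v)" unfolding r_def by auto
      moreover have "\<exists>z. z \<in> F v" using ne v by blast
      ultimately show ?thesis by (metis someI_ex)
    qed
  qed
  moreover have "r c1 = z1 \<and> r c2 = z2 \<and> r c3 = z3 \<and> r c4 = z4" unfolding r_def using c by auto
  ultimately show ?thesis by blast
qed

lemma prime_part_blocks_split:
  assumes simple: "simple_graph G" and conn: "connected G" and inv: "dec_inv G D"
    and P: "P \<in> D" "prime_graph P" "finite (verts P)"
    and sp: "is_split G A (verts G - A)"
    and p: "p1 \<in> verts P" "p2 \<in> verts P" "act G D P p1 \<inter> A \<noteq> {}" "act G D P p2 \<inter> A \<noteq> {}"
    and q: "q1 \<in> verts P" "q2 \<in> verts P" "act G D P q1 - A \<noteq> {}" "act G D P q2 - A \<noteq> {}"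
    and distinct: "p1 \<noteq> p2" "p1 \<noteq> q1" "p1 \<noteq> q2" "p2 \<noteq> q1" "p2 \<noteq> q2" "q1 \<noteq> q2"
  shows False
proof -
  have "\<forall>v\<in>verts P. act G D P v \<noteq> {}"
    using act_nonempty[OF simple conn inv P(1)] p(1,2) distinct(1) by metis
  moreover obtain z1 z2 z3 z4 where "z1 \<in> act G D P p1" "z2 \<in> act G D P p2" "z3 \<in> act G D P q1"
    "z4 \<in> act G D P q2" "z1 \<in> A" "z2 \<in> A" "z3 \<notin> A" "z4 \<notin> A" using p(3,4) q(3,4) by blast
  ultimately obtain r where "\<forall>v\<in>verts P. r v \<in> act G D P v" "r p1 \<in> A" "r p2 \<in> A" "r q1 \<notin> A" "r q2 \<notin> A"
    using representatives_exist[OF _ distinct] by metis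
  then have "is_split P {v\<in>verts P. r v \<in> A} {v\<in>verts P. r v \<notin> A}"
    using split_from_representatives[OF inv P(1,3) sp] p(1,2) q(1,2) distinct by blast
  then show False using P(2) unfolding prime_graph_def by blast
qed

lemma two_elements:
  assumes "finite X" "card X \<ge> 2"
  shows "\<exists>a\<in>X. \<exists>b\<in>X. a \<noteq> b"
proof (rule ccontr)
  assume "\<not> ?thesis"
  then have "card X \<le> Suc 0" using assms(1) card_le_Suc0_iff_eq by blast
  then show False using assms(2) by simp
qed

lemma three_distinct:
  assumes fin: "finite SA" "finite SB" and card: "card SA \<ge> 2" "card SB \<ge> 2" "card (SA \<union> SB) \<ge> 3"
  shows "\<exists>a\<in>SA. \<exists>b1\<in>SB. \<exists>b2\<in>SB. b1 \<noteq> b2 \<and> a \<noteq> b1 \<and> a \<noteq> b2"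
proof (cases "card SB \<ge> 3")
  case True
  obtain a where a: "a \<in> SA" using card(1) by fastforce
  have two: "card (SB - {a}) \<ge> 2" using True fin(2) by (auto simp: card_Diff_singleton_if)
  from two_elements[OF finite_Diff[OF fin(2)] two]
  obtain b1 b2 where b: "b1 \<in> SB" "b2 \<in> SB" "b1 \<noteq> b2" "a \<noteq> b1" "a \<noteq> b2" by blast
  show ?thesis by (rule bexI[OF _ a], rule bexI[OF _ b(1)], rule bexI[OF _ b(2)]) (use b in simp)
next
  case False
  have "\<not> SA \<subseteq> SB"
  proof
    assume "SA \<subseteq> SB"
    then have "SA \<union> SB = SB" by blast
    then show False using False card(3) by simp
  qed
  then obtain a where a: "a \<in> SA" "a \<notin> SB" by blast
  from two_elements[OF fin(2) card(2)] obtain b1 b2 where b: "b1 \<in> SB" "b2 \<in> SB" "b1 \<noteq> b2" by blast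
  have ab: "a \<noteq> b1" "a \<noteq> b2" using a(2) b(1,2) by auto
  show ?thesis by (rule bexI[OF _ a(1)], rule bexI[OF _ b(1)], rule bexI[OF _ b(2)]) (use b ab in simp)
qed

lemma card_UN_le_bound:
  assumes "finite S" "\<forall>a\<in>S. card (F a) < c"
  shows "card (\<Union>a\<in>S. F a) \<le> card S * (c - 1)"
proof -
  have "card (\<Union>a\<in>S. F a) \<le> (\<Sum>a\<in>S. card (F a))" using assms(1) by (rule card_UN_le)
  also have "\<dots> \<le> (\<Sum>a\<in>S. c - 1)" using assms(2) by (intro sum_mono) fastforce
  finally show ?thesis by simp
qed

lemma many_sets_needed:
  fixes j n c :: nat
  assumes "j * c \<le> n * (c - 1)" "0 < j" "0 < c"
  shows "j < n"
proof (rule ccontr)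
  assume "\<not> j < n"
  then have "n * (c - 1) \<le> j * (c - 1)" by (simp add: mult_le_mono1)
  also have "\<dots> < j * c" using assms(2,3) by (simp add: mult_less_mono2)
  finally show False using assms(1) by simp
qed

lemma light_sets_spread:
  fixes F :: "'b \<Rightarrow> 'a set"
  assumes k: "k > 0" and fin: "finite S" "finite (\<Union>a\<in>S. F a)"
    and light: "\<forall>a\<in>S. card (F a) < 3 * k" and Z: "Z \<subseteq> (\<Union>a\<in>S. F a)"
    and big: "card (Z \<inter> A) \<ge> 3 * k" "card (Z - A) \<ge> 3 * k"
  defines "SA \<equiv> {a \<in> S. F a \<inter> A \<noteq> {}}" and "SB \<equiv> {a \<in> S. F a - A \<noteq> {}}"
  shows "card SA \<ge> 2" "card SB \<ge> 2" "card (SA \<union> SB) \<ge> 3"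
proof -
  have bound: "card Y \<le> card T * (3 * k - 1)" if "Y \<subseteq> (\<Union>a\<in>T. F a)" "T \<subseteq> S" for Y T
  proof -
    have "(\<Union>a\<in>T. F a) \<subseteq> (\<Union>a\<in>S. F a)" using that(2) by (rule UN_mono) simp
    then have "finite (\<Union>a\<in>T. F a)" using fin(2) by (rule finite_subset)
    then have "card Y \<le> card (\<Union>a\<in>T. F a)" using that(1) by (rule card_mono)
    also have "\<dots> \<le> card T * (3 * k - 1)"
      using card_UN_le_bound[OF finite_subset[OF that(2) fin(1)]] light that(2) by blast
    finally show ?thesis .
  qed
  have S_sub: "SA \<subseteq> S" "SB \<subseteq> S" "SA \<union> SB \<subseteq> S" unfolding SA_def SB_def by auto
  have cov_A: "Z \<inter> A \<subseteq> (\<Union>a\<in>SA. F a)"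
  proof
    fix z assume z: "z \<in> Z \<inter> A"
    then obtain a where "a \<in> S" "z \<in> F a" using Z by blast
    then show "z \<in> (\<Union>a\<in>SA. F a)" using z unfolding SA_def by blast
  qed
  have cov_B: "Z - A \<subseteq> (\<Union>a\<in>SB. F a)"
  proof
    fix z assume z: "z \<in> Z - A"
    then obtain a where "a \<in> S" "z \<in> F a" using Z by blast
    then show "z \<in> (\<Union>a\<in>SB. F a)" using z unfolding SB_def by blast
  qed
  have "Z \<subseteq> (\<Union>a\<in>SA. F a) \<union> (\<Union>a\<in>SB. F a)" using cov_A cov_B by blast
  then have cov: "Z \<inter> A \<subseteq> (\<Union>a\<in>SA. F a)" "Z - A \<subseteq> (\<Union>a\<in>SB. F a)" "Z \<subseteq> (\<Union>a\<in>SA \<union> SB. F a)"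
    using cov_A cov_B by (simp_all add: UN_Un)
  have "finite Z" using Z fin(2) finite_subset by blast
  then have "card Z = card (Z \<inter> A) + card (Z - A)" by (rule card_Int_Diff)
  then have need: "1 * (3 * k) \<le> card SA * (3 * k - 1)" "1 * (3 * k) \<le> card SB * (3 * k - 1)"
    "2 * (3 * k) \<le> card (SA \<union> SB) * (3 * k - 1)"
    using bound[OF cov(1) S_sub(1)] bound[OF cov(2) S_sub(2)] bound[OF cov(3) S_sub(3)] big
    by linarith+
  have "1 < card SA" "1 < card SB" "2 < card (SA \<union> SB)"
    using many_sets_needed[OF need(1)] many_sets_needed[OF need(2)] many_sets_needed[OF need(3)] k
    by simp_all
  then show "card SA \<ge> 2" "card SB \<ge> 2" "card (SA \<union> SB) \<ge> 3" by simp_all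
qed

lemma act_complete:
  assumes inv: "dec_inv G D" and P: "P \<in> D" and b: "b \<in> verts P"
    and x: "x \<in> act G D P b" and y: "y \<in> act_set G D P (nbr P b)"
  shows "adj G x y"
proof -
  obtain a where a: "a \<in> nbr P b" "y \<in> act G D P a" using y unfolding act_set_def by blast
  have ab: "adj P b a" "a \<in> verts P" "b \<noteq> a" using a(1) dec_inv_adj[OF inv P] unfolding nbr_def by auto
  have "adj G x y \<longleftrightarrow> adj P b a \<and> x \<in> act G D P b \<and> y \<in> act G D P a"
    by (rule tot_adj[OF inv P b ab(2,3) subsetD[OF act_subset_tot x] subsetD[OF act_subset_tot a(2)]])
  then show ?thesis using ab(1) x a(2) by simp
qed

lemma balanced_cut:
  assumes width: "sm_width_less G k" and Y: "Y \<subseteq> verts G" "finite Y" "card Y \<ge> 9 * k" and k: "k > 0"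
  shows "\<exists>A\<subseteq>verts G. sm G A < k \<and> card (Y \<inter> A) \<ge> 3 * k \<and> card (Y - A) \<ge> 3 * k"
proof -
  obtain N E \<delta> where bd: "branch_decomposition G N E \<delta>"
    and small: "\<forall>e\<in>E. \<forall>x\<in>e. sm G (induced_cut N E \<delta> e x) < k"
    using width unfolding sm_width_less_def by blast
  have T: "tree N E" and deg: "\<forall>x\<in>N. tdeg E x \<le> 3" and img: "\<delta> ` leaves N E = verts G"
    using bd unfolding branch_decomposition_def bij_betw_def by auto
  obtain e x where ex: "e \<in> E" "x \<in> e" "card (Y \<inter> induced_cut N E \<delta> e x) \<ge> 3 * k"
      "card (Y - induced_cut N E \<delta> e x) \<ge> 3 * k"
    using balanced_edge[OF T deg _ Y(2,3) k] Y(1) img by blast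
  moreover have "induced_cut N E \<delta> e x \<subseteq> verts G" using img unfolding induced_cut_def by blast
  ultimately show ?thesis using small by blast
qed

text \<open>If every vertex of X is adjacent to every vertex of Y, X has at least 2k vertices
  and Y at least k on each side of the cut, then mm(A) is at least k: X has k vertices
  on one side, to be matched with k vertices of Y on the other.\<close>

lemma mm_ge_complete_sides:
  assumes simple: "simple_graph G" and sub: "X \<subseteq> verts G" "Y \<subseteq> verts G" "A \<subseteq> verts G"
    and complete: "\<forall>x\<in>X. \<forall>y\<in>Y. adj G x y"
    and card: "card X \<ge> 2 * k" "card (Y \<inter> A) \<ge> k" "card (Y - A) \<ge> k"
  shows "mm G A \<ge> k"
proof -
  have fin: "finite (verts G)" using simple unfolding simple_graph_def by blast
  then have "finite X" using sub(1) finite_subset by blast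
  then have "card X = card (X \<inter> A) + card (X - A)" by (rule card_Int_Diff)
  then have "card (X \<inter> A) \<ge> k \<or> card (X - A) \<ge> k" using card(1) by linarith
  then show ?thesis
  proof
    assume "card (X \<inter> A) \<ge> k"
    then show ?thesis using mm_ge_complete[OF fin, of "X \<inter> A" A "Y - A" k] card(3) complete sub by blast
  next
    assume "card (X - A) \<ge> k"
    moreover have "\<forall>y\<in>Y \<inter> A. \<forall>x\<in>X - A. adj G y x"
      using complete simple unfolding simple_graph_def by blast
    ultimately show ?thesis using mm_ge_complete[OF fin, of "Y \<inter> A" A "X - A" k] card(2) sub by blast
  qed
qed

text \<open>The heart of the argument: if all neighbours of b are light, a cut putting at
  least 3k of their active vertices on each side is not a split.  Otherwise at least
  two neighbours are active in A, two outside A, and three overall; together with b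
  this gives four vertices of P contradicting primality.\<close>

lemma light_neighbourhood_cut_not_split:
  assumes simple: "simple_graph G" and conn: "connected G" and inv: "dec_inv G D"
    and P: "P \<in> D" "prime_graph P" "finite (verts P)" and b: "b \<in> verts P" "act G D P b \<noteq> {}"
    and k: "k > 0" and light: "\<forall>a\<in>nbr P b. card (act G D P a) < 3 * k"
    and Y: "card (act_set G D P (nbr P b) \<inter> A) \<ge> 3 * k" "card (act_set G D P (nbr P b) - A) \<ge> 3 * k"
  shows "\<not> is_split G A (verts G - A)"
proof
  assume split: "is_split G A (verts G - A)"
  define SA where "SA = {a \<in> nbr P b. act G D P a \<inter> A \<noteq> {}}"
  define SB where "SB = {a \<in> nbr P b. act G D P a - A \<noteq> {}}"
  have nbr_P: "nbr P b \<subseteq> verts P" unfolding nbr_def by blast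
  have b_nbr: "b \<notin> nbr P b" using dec_inv_adj[OF inv P(1)] unfolding nbr_def by blast
  have fin: "finite SA" "finite SB" using finite_subset[OF nbr_P P(3)] unfolding SA_def SB_def by simp_all
  have "(\<Union>a\<in>nbr P b. act G D P a) \<subseteq> verts G" by (simp add: UN_subset_iff act_subset)
  then have "finite (\<Union>a\<in>nbr P b. act G D P a)"
    using finite_subset simple unfolding simple_graph_def by blast
  then have cards: "card SA \<ge> 2" "card SB \<ge> 2" "card (SA \<union> SB) \<ge> 3"
    using light_sets_spread[OF k finite_subset[OF nbr_P P(3)] _ light _ Y]
    unfolding SA_def SB_def act_set_def by simp_all
  have three: "\<exists>a\<in>SA. \<exists>c1\<in>SB. \<exists>c2\<in>SB. c1 \<noteq> c2 \<and> a \<noteq> c1 \<and> a \<noteq> c2"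
    "\<exists>a\<in>SB. \<exists>c1\<in>SA. \<exists>c2\<in>SA. c1 \<noteq> c2 \<and> a \<noteq> c1 \<and> a \<noteq> c2"
    using three_distinct[OF fin cards] three_distinct[OF fin(2,1) cards(2,1)] cards(3)
    by (simp_all add: Un_commute)
  have in_P: "a \<in> verts P" "a \<noteq> b" if "a \<in> SA \<union> SB" for a
    using that nbr_P b_nbr unfolding SA_def SB_def by auto
  note blocks = prime_part_blocks_split[OF simple conn inv P(1,2,3) split]
  show False
  proof (cases "act G D P b \<inter> A = {}")
    case True
    then have b_out: "act G D P b - A \<noteq> {}" using b(2) by blast
    from three(2) obtain a c1 c2 where abc: "a \<in> SB" "c1 \<in> SA" "c2 \<in> SA" "c1 \<noteq> c2" "a \<noteq> c1" "a \<noteq> c2"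
      by blast
    have act: "act G D P c1 \<inter> A \<noteq> {}" "act G D P c2 \<inter> A \<noteq> {}" "act G D P a - A \<noteq> {}"
      using abc unfolding SA_def SB_def by auto
    have verts: "c1 \<in> verts P" "c2 \<in> verts P" "a \<in> verts P" "c1 \<noteq> b" "c2 \<noteq> b" "a \<noteq> b"
      using in_P abc(1-3) by auto
    show False by (rule blocks[of c1 c2 a b]) (use act verts abc b(1) b_out in auto)
  next
    case False
    from three(1) obtain a c1 c2 where abc: "a \<in> SA" "c1 \<in> SB" "c2 \<in> SB" "c1 \<noteq> c2" "a \<noteq> c1" "a \<noteq> c2"
      by blast
    have act: "act G D P a \<inter> A \<noteq> {}" "act G D P c1 - A \<noteq> {}" "act G D P c2 - A \<noteq> {}"
      using abc unfolding SA_def SB_def by auto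
    have verts: "c1 \<in> verts P" "c2 \<in> verts P" "a \<in> verts P" "c1 \<noteq> b" "c2 \<noteq> b" "a \<noteq> b"
      using in_P abc(1-3) by auto
    show False by (rule blocks[of b a c1 c2]) (use act verts abc b(1) False in auto)
  qed
qed

theorem mainTheorem5:
  fixes G :: "'a graph" and D :: "'a graph set" and P :: "'a graph" and k :: nat and b :: 'a
  assumes "simple_graph G"
    and "k > 0"
    and "split_decomposition G D"
    and "P \<in> D"
    and "card (verts P) > 3"
    and "sm_width_less G k"
    and "b \<in> verts P"
    and "card (act G D P b) \<ge> 3 * k"
    and "card (act_set G D P (nbr P b)) \<ge> 9 * k"
  shows "\<exists>a\<in>nbr P b. card (act G D P a) \<ge> 3 * k"
proof (rule ccontr)
  assume "\<not> ?thesis"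
  then have light: "\<forall>a\<in>nbr P b. card (act G D P a) < 3 * k" by auto
  let ?X = "act G D P b" and ?Y = "act_set G D P (nbr P b)"
  have dec: "split_dec G D" and prime: "prime_graph P"
    using assms(3,4) unfolding split_decomposition_def by auto
  have inv: "dec_inv G D" and conn: "connected G"
    using split_dec_inv[OF assms(1) dec] split_dec_connected[OF dec] .
  have sub: "?X \<subseteq> verts G" "?Y \<subseteq> verts G" by (simp_all add: act_set_def UN_subset_iff act_subset)
  have "finite ?Y" using sub(2) assms(1) finite_subset unfolding simple_graph_def by blast
  then obtain A where A: "A \<subseteq> verts G" "sm G A < k" "card (?Y \<inter> A) \<ge> 3 * k" "card (?Y - A) \<ge> 3 * k"
    using balanced_cut[OF assms(6) sub(2) _ assms(9,2)] by blast
  have "?X \<noteq> {}" using assms(2,8) by auto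
  moreover have "finite (verts P)" using assms(5) card.infinite by fastforce
  ultimately have "\<not> is_split G A (verts G - A)"
    using light_neighbourhood_cut_not_split[OF assms(1) conn inv assms(4) prime _ assms(7) _ assms(2) light A(3,4)]
    by blast
  then have "sm G A = mm G A" unfolding sm_def by simp
  moreover have "mm G A \<ge> k"
    using mm_ge_complete_sides[OF assms(1) sub A(1)] act_complete[OF inv assms(4,7)] assms(8) A(3,4) by simp
  ultimately show False using A(2) by simp
qed

end
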